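(* Let $\phi:A\rightarrow K\{\tau\}$ be a Drinfeld module and let $v$ be a discrete valuation on $K$. If $\phi$ has generic characteristic, assume moreover that $v$ does not lie over the place $v_\infty$ of $\mathrm{Frac}(A)$ associated to the closed point $\infty\in C$. Then there exists a positive constant $C_v$ depending only on $\phi$ and $v$ such that the ball $\{x\in K_v^{\mathrm{alg}} : v(x)\ge C_v\}$ contains no nonzero torsion points of $\phi$.
   Context: Let $p$ be a prime, $q$ a power of $p$, $C$ a nonsingular projective curve over $\mathbb{F}_q$ with a fixed closed point $\infty$, and $A$ the ring of functions on $C$ regular away from $\infty$. Let $K$ be a field extension of $\mathbb{F}_q$ with a fixed ring morphism $i:A\to K$. $K\{\tau\}$ is the ring of polynomials in the Frobenius $\tau:x\mapsto x^q$ with coefficients in $K$, multiplication being composition. A Drinfeld module is a ring morphism $\phi:A\to K\{\tau\}$, $a\mapsto \phi_a$, such that the $\tau^0$-coefficient of $\phi_a$ is $i(a)$ for all $a$ and $\phi_a\ne i(a)\tau^0$ for some $a$. It has generic characteristic if $\ker i=0$ (then $i$ is assumed to extend to an embedding $\mathrm{Frac}(A)\hookrightarrow K$), finite characteristic otherwise. $K_v$ is the completion of $K$ at $v$ (with $v$ having value group $\mathbb{Z}$ on $K$), $K_v^{\mathrm{alg}}$ a fixed algebraic closure to which $v$ is extended (value group $\mathbb{Q}$). A torsion point of $\phi$ in $K_v^{\mathrm{alg}}$ is an $x$ with $\phi_a(x)=0$ for some nonzero $a\in A$. *)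

theory Defs
  imports "HOL-Computational_Algebra.Polynomial"
begin

(* a (Krull) valuation on a field, given on nonzero elements; the value at 0
   (conventionally +infinity) is irrelevant and never used *)
definition valuation :: "('a::field \<Rightarrow> 'b::linordered_ab_group_add) \<Rightarrow> bool" where
  "valuation v \<longleftrightarrow>
     (\<forall>x y. x \<noteq> 0 \<longrightarrow> y \<noteq> 0 \<longrightarrow>
        v (x * y) = v x + v y \<and> (x + y \<noteq> 0 \<longrightarrow> min (v x) (v y) \<le> v (x + y)))"

definition discrete_valuation :: "('a::field \<Rightarrow> int) \<Rightarrow> bool" where
  "discrete_valuation v \<longleftrightarrow> valuation v \<and> (\<forall>n. \<exists>x. x \<noteq> 0 \<and> v x = n)"

definition subfield :: "'a::field set \<Rightarrow> bool" where
  "subfield S \<longleftrightarrow> 0 \<in> S \<and> 1 \<in> S \<and>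
     (\<forall>x\<in>S. \<forall>y\<in>S. x + y \<in> S \<and> x - y \<in> S \<and> x * y \<in> S) \<and>
     (\<forall>x\<in>S. inverse x \<in> S)"

definition coeffs_in :: "'a::zero set \<Rightarrow> 'a poly \<Rightarrow> bool" where
  "coeffs_in S P \<longleftrightarrow> (\<forall>n. coeff P n \<in> S)"

definition transcendental_over :: "'a::field set \<Rightarrow> 'a \<Rightarrow> bool" where
  "transcendental_over S t \<longleftrightarrow> (\<forall>P. coeffs_in S P \<longrightarrow> P \<noteq> 0 \<longrightarrow> poly P t \<noteq> 0)"

definition rat_fun_field :: "'a::field set \<Rightarrow> 'a \<Rightarrow> 'a set" where
  "rat_fun_field S t = {poly P t / poly Q t | P Q. coeffs_in S P \<and> coeffs_in S Q \<and> poly Q t \<noteq> 0}"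

definition finite_dim_over :: "'a::field set \<Rightarrow> bool" where
  "finite_dim_over E \<longleftrightarrow>
     (\<exists>B. finite B \<and> (\<forall>x. \<exists>c. (\<forall>b\<in>B. c b \<in> E) \<and> x = (\<Sum>b\<in>B. c b * b)))"

(* the ambient field (type 'a) is a function field in one variable over the subfield Fq,
   i.e. the function field of a nonsingular projective curve over Fq:
   finitely generated of transcendence degree 1 *)
definition function_field_over :: "'a::field set \<Rightarrow> bool" where
  "function_field_over Fq \<longleftrightarrow>
     (\<exists>t. transcendental_over Fq t \<and> finite_dim_over (rat_fun_field Fq t))"

(* places of F/Fq (= closed points of the curve C), represented by their normalized
   discrete valuations, trivial on Fq *)
definition place :: "'a::field set \<Rightarrow> ('a \<Rightarrow> int) \<Rightarrow> bool" where
  "place Fq w \<longleftrightarrow> discrete_valuation w \<and> (\<forall>c\<in>Fq. c \<noteq> 0 \<longrightarrow> w c = 0)"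

definition same_val :: "('a::field \<Rightarrow> 'b) \<Rightarrow> ('a \<Rightarrow> 'b) \<Rightarrow> bool" where
  "same_val w w' \<longleftrightarrow> (\<forall>x. x \<noteq> 0 \<longrightarrow> w x = w' x)"

definition ring_A :: "'a::field set \<Rightarrow> ('a \<Rightarrow> int) \<Rightarrow> 'a set" where
  "ring_A Fq vinf = {f. \<forall>w. place Fq w \<longrightarrow> \<not> same_val w vinf \<longrightarrow> f = 0 \<or> 0 \<le> w f}"

(* an element  sum_n c_n tau^n  of K{tau} is stored as the polynomial with coefficients c_n;
   multiplication in K{tau} (composition): tau^i c = c^(q^i) tau^i *)
definition tmult :: "nat \<Rightarrow> 'a::field poly \<Rightarrow> 'a poly \<Rightarrow> 'a poly" where
  "tmult q f g = (\<Sum>i\<le>degree f. monom (coeff f i) i * map_poly (\<lambda>c. c ^ (q ^ i)) g)"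

definition tau_eval :: "nat \<Rightarrow> 'a::field poly \<Rightarrow> 'a \<Rightarrow> 'a" where
  "tau_eval q f x = (\<Sum>n\<le>degree f. coeff f n * x ^ (q ^ n))"

definition ring_hom_on :: "'a::field set \<Rightarrow> ('a \<Rightarrow> 'b::field) \<Rightarrow> bool" where
  "ring_hom_on A i \<longleftrightarrow> i 1 = 1 \<and> (\<forall>a\<in>A. \<forall>b\<in>A. i (a + b) = i a + i b \<and> i (a * b) = i a * i b)"

definition drinfeld_module ::
    "nat \<Rightarrow> 'a::field set \<Rightarrow> ('a \<Rightarrow> 'k::field) \<Rightarrow> ('a \<Rightarrow> 'k poly) \<Rightarrow> bool" where
  "drinfeld_module q A i \<phi> \<longleftrightarrow>
     \<phi> 1 = 1 \<and>
     (\<forall>a\<in>A. \<forall>b\<in>A. \<phi> (a + b) = \<phi> a + \<phi> b \<and> \<phi> (a * b) = tmult q (\<phi> a) (\<phi> b)) \<and>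
     (\<forall>a\<in>A. coeff (\<phi> a) 0 = i a) \<and>
     (\<exists>a\<in>A. \<phi> a \<noteq> [:i a:])"

definition generic_char :: "'a::field set \<Rightarrow> ('a \<Rightarrow> 'k::field) \<Rightarrow> bool" where
  "generic_char A i \<longleftrightarrow> (\<forall>a\<in>A. i a = 0 \<longrightarrow> a = 0)"

(* v (on K) lies over v_inf: the valuation v \<circ> i on Frac(A) is equivalent to v_inf
   (a positive multiple of it); checked on A, which generates Frac(A) *)
definition lies_over :: "'a::field set \<Rightarrow> ('a \<Rightarrow> 'k::field) \<Rightarrow> ('k \<Rightarrow> int) \<Rightarrow> ('a \<Rightarrow> int) \<Rightarrow> bool" where
  "lies_over A i v vinf \<longleftrightarrow>
     (\<exists>e::real. e > 0 \<and> (\<forall>a\<in>A. a \<noteq> 0 \<longrightarrow> real_of_int (v (i a)) = e * real_of_int (vinf a)))"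

definition field_hom :: "('a::field \<Rightarrow> 'b::field) \<Rightarrow> bool" where
  "field_hom j \<longleftrightarrow> j 1 = 1 \<and> (\<forall>x y. j (x + y) = j x + j y \<and> j (x * y) = j x * j y)"

definition val_converges :: "('a::field \<Rightarrow> rat) \<Rightarrow> (nat \<Rightarrow> 'a) \<Rightarrow> 'a \<Rightarrow> bool" where
  "val_converges w s l \<longleftrightarrow> (\<forall>M. \<exists>N. \<forall>n\<ge>N. s n \<noteq> l \<longrightarrow> M \<le> w (s n - l))"

definition val_cauchy :: "('a::field \<Rightarrow> rat) \<Rightarrow> (nat \<Rightarrow> 'a) \<Rightarrow> bool" where
  "val_cauchy w s \<longleftrightarrow> (\<forall>M. \<exists>N. \<forall>m\<ge>N. \<forall>n\<ge>N. s m \<noteq> s n \<longrightarrow> M \<le> w (s m - s n))"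

definition completion_in :: "('k \<Rightarrow> 'l::field) \<Rightarrow> ('l \<Rightarrow> rat) \<Rightarrow> 'l set" where
  "completion_in j w = {l. \<exists>s. (\<forall>n. s n \<in> range j) \<and> val_converges w s l}"

(* (L, w, j) is an algebraic closure K_v^alg of the completion K_v of (K, v), with the
   valuation v extended to it *)
definition is_alg_closure_of_completion ::
    "('k::field \<Rightarrow> int) \<Rightarrow> ('k \<Rightarrow> 'l::field) \<Rightarrow> ('l \<Rightarrow> rat) \<Rightarrow> bool" where
  "is_alg_closure_of_completion v j w \<longleftrightarrow>
     field_hom j \<and> valuation w \<and>
     (\<forall>x. x \<noteq> 0 \<longrightarrow> w (j x) = of_int (v x)) \<and>
     (\<forall>s. (\<forall>n. s n \<in> range j) \<longrightarrow> val_cauchy w s \<longrightarrow> (\<exists>l. val_converges w s l)) \<and>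
     (\<forall>P::'l poly. degree P \<ge> 1 \<longrightarrow> (\<exists>x. poly P x = 0)) \<and>
     (\<forall>x. \<exists>P. P \<noteq> 0 \<and> coeffs_in (completion_in j w) P \<and> poly P x = 0)"

definition torsion_point ::
    "nat \<Rightarrow> 'a::field set \<Rightarrow> ('a \<Rightarrow> 'k::field poly) \<Rightarrow> ('k \<Rightarrow> 'l::field) \<Rightarrow> 'l \<Rightarrow> bool" where
  "torsion_point q A \<phi> j x \<longleftrightarrow> (\<exists>a\<in>A. a \<noteq> 0 \<and> tau_eval q (map_poly j (\<phi> a)) x = 0)"

end

theory Submission
  imports Defs
begin

text \<open>Near \<open>0\<close>, the value of a twisted polynomial \<open>f = \<Sum> c\<^sub>n \<tau>\<^sup>n\<close> at \<open>x\<close> is dominated by its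
  lowest nonzero term, so \<open>w (f x) = w c\<^sub>m + q\<^sup>m w x\<close> on a small enough ball. If some \<open>s \<in> A\<close>
  has \<open>i s = 0\<close> or \<open>v (i s) > 0\<close> (always the case in finite characteristic), then \<open>\<phi>\<^sub>s\<close> strictly
  increases valuations on the ball and, \<open>\<phi>\<close> being commutative, maps the roots of any \<open>\<phi>\<^sub>a\<close>
  there to roots of \<open>\<phi>\<^sub>a\<close>; a nonzero torsion point would have an infinite orbit in the finite
  root set of some \<open>\<phi>\<^sub>a\<close>. Otherwise the characteristic is generic and \<open>v \<circ> i\<close> is \<open>0\<close> on
  \<open>A - {0}\<close>: a negative value would extend \<open>v \<circ> i\<close> to a place of the function field with a
  pole on \<open>A\<close>, i.e. lying over \<open>\<infinity>\<close>. Then for \<open>t\<close> with \<open>\<phi>\<^sub>t\<close> nonconstant, \<open>\<phi>\<^sub>t\<close> preserves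
  valuations on the ball and agrees with multiplication by the unit \<open>c = i t\<close> up to terms of
  larger valuation. It permutes the torsion points of a given valuation, and a cycle of length
  \<open>N\<close> forces \<open>w (1 - c\<^sup>N) > 0\<close>, although \<open>1 - c\<^sup>N = i (1 - t\<^sup>N)\<close> is a unit.\<close>

section \<open>Valuations\<close>

definition val_ge :: "('a::zero \<Rightarrow> 'b::ord) \<Rightarrow> 'b \<Rightarrow> 'a \<Rightarrow> bool" where
  "val_ge v M x \<longleftrightarrow> x = 0 \<or> M \<le> v x"

definition val_gt :: "('a::zero \<Rightarrow> 'b::ord) \<Rightarrow> 'b \<Rightarrow> 'a \<Rightarrow> bool" where
  "val_gt v M x \<longleftrightarrow> x = 0 \<or> M < v x"

lemma val_ge_0 [simp]: "val_ge v M 0"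
  by (simp add: val_ge_def)

lemma val_gt_0 [simp]: "val_gt v M 0"
  by (simp add: val_gt_def)

context
  fixes v :: "'a::field \<Rightarrow> 'b::linordered_idom"
  assumes v: "valuation v"
begin

lemma valuation_mult: "x \<noteq> 0 \<Longrightarrow> y \<noteq> 0 \<Longrightarrow> v (x * y) = v x + v y"
  using v by (simp add: valuation_def)

lemma valuation_add: "x \<noteq> 0 \<Longrightarrow> y \<noteq> 0 \<Longrightarrow> x + y \<noteq> 0 \<Longrightarrow> min (v x) (v y) \<le> v (x + y)"
  using v by (simp add: valuation_def)

lemma valuation_one: "v 1 = 0"
  using valuation_mult[of 1 1] by simp

lemma valuation_uminus: "x \<noteq> 0 \<Longrightarrow> v (- x) = v x"
proof -
  have "v (-1) + v (-1) = 0"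
    using valuation_mult[of "-1" "-1"] valuation_one by simp
  hence "v (-1) = 0"
    by (metis add_nonneg_eq_0_iff add_strict_mono less_irrefl not_less)
  thus "x \<noteq> 0 \<Longrightarrow> v (- x) = v x"
    using valuation_mult[of "-1" x] by simp
qed

lemma valuation_inverse: "x \<noteq> 0 \<Longrightarrow> v (inverse x) = - v x"
  using valuation_mult[of x "inverse x"] valuation_one by (simp add: eq_neg_iff_add_eq_0)

lemma valuation_power: "x \<noteq> 0 \<Longrightarrow> v (x ^ n) = of_nat n * v x"
  by (induction n) (auto simp: valuation_one valuation_mult algebra_simps)

lemma val_ge_add: "val_ge v M x \<Longrightarrow> val_ge v M y \<Longrightarrow> val_ge v M (x + y)"
  unfolding val_ge_def using valuation_add[of x y]
  by (cases "x = 0"; cases "y = 0"; cases "x + y = 0") auto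

lemma val_gt_add: "val_gt v M x \<Longrightarrow> val_gt v M y \<Longrightarrow> val_gt v M (x + y)"
  unfolding val_gt_def using valuation_add[of x y]
  by (cases "x = 0"; cases "y = 0"; cases "x + y = 0") auto

lemma val_ge_sum: "(\<And>i. i \<in> I \<Longrightarrow> val_ge v M (f i)) \<Longrightarrow> val_ge v M (\<Sum>i\<in>I. f i)"
  by (induction I rule: infinite_finite_induct) (auto intro: val_ge_add)

lemma val_gt_sum: "(\<And>i. i \<in> I \<Longrightarrow> val_gt v M (f i)) \<Longrightarrow> val_gt v M (\<Sum>i\<in>I. f i)"
  by (induction I rule: infinite_finite_induct) (auto intro: val_gt_add)

lemma val_ge_mult: "val_ge v M x \<Longrightarrow> y \<noteq> 0 \<Longrightarrow> val_ge v (M + v y) (y * x)"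
  unfolding val_ge_def by (cases "x = 0") (simp_all add: valuation_mult add.commute)

lemma valuation_add_dominant:
  assumes a: "a \<noteq> 0" and r: "val_gt v (v a) r"
  shows "a + r \<noteq> 0 \<and> v (a + r) = v a"
proof (cases "r = 0")
  case True
  then show ?thesis using a by simp
next
  case False
  hence less: "v a < v r" using r by (simp add: val_gt_def)
  have ne: "a + r \<noteq> 0"
  proof
    assume "a + r = 0"
    hence "r = - a" by (simp add: eq_neg_iff_add_eq_0 add.commute)
    thus False using less valuation_uminus[OF a] by simp
  qed
  have "min (v a) (v r) \<le> v (a + r)"
    using valuation_add[OF a False ne] .
  moreover have "min (v (a + r)) (v r) \<le> v a"
    using valuation_add[of "a + r" "- r"] ne False a valuation_uminus[OF False] by simp
  ultimately show ?thesis using less ne by (auto simp: min_def split: if_splits)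
qed

lemma poly_nonzero_at_negative_valuation:
  assumes P: "P \<noteq> 0"
    and lead: "\<And>k. k < degree P \<Longrightarrow> coeff P k = 0 \<or> v (lead_coeff P) \<le> v (coeff P k)"
    and z: "z \<noteq> 0" "v z < 0"
  shows "poly P z \<noteq> 0"
proof -
  define d where "d = degree P"
  define T where "T k = coeff P k * z ^ k" for k
  have Td: "T d \<noteq> 0" using P z by (simp add: T_def d_def)
  have vTd: "v (T d) = v (lead_coeff P) + of_nat d * v z"
    using P z by (simp add: T_def d_def valuation_mult valuation_power)
  have "val_gt v (v (T d)) (\<Sum>k<d. T k)"
  proof (rule val_gt_sum)
    fix k assume k: "k \<in> {..<d}"
    show "val_gt v (v (T d)) (T k)"
    proof (cases "coeff P k = 0")
      case False
      have "of_nat d * v z < of_nat k * v z"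
        using k z(2) by (simp add: mult_strict_right_mono_neg)
      moreover have "v (lead_coeff P) \<le> v (coeff P k)"
        using lead[of k] k False by (auto simp: d_def)
      ultimately have "v (T d) < v (T k)"
        using False z vTd by (simp add: T_def valuation_mult valuation_power add_le_less_mono)
      thus ?thesis by (simp add: val_gt_def)
    qed (simp add: T_def)
  qed
  moreover have "poly P z = T d + (\<Sum>k<d. T k)"
    by (simp add: poly_altdef T_def d_def lessThan_Suc_atMost[symmetric])
  ultimately show ?thesis using valuation_add_dominant[OF Td] by simp
qed

end

context
  fixes u :: "'a::field \<Rightarrow> int"
  assumes u: "valuation u"
begin

lemma valuation_int_multiple:
  assumes g: "g \<noteq> 0"
  obtains y where "y \<noteq> 0" "u y = k * u g"
proof -
  define y where "y = (if 0 \<le> k then g ^ nat k else inverse (g ^ nat (- k)))"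
  have "y \<noteq> 0" "u y = k * u g"
    using g valuation_power[OF u g] valuation_inverse[OF u] by (auto simp: y_def)
  thus thesis using that by blast
qed

lemma valuation_least_positive_dvd:
  assumes g: "g \<noteq> 0" "0 < u g" and least: "\<And>y. y \<noteq> 0 \<Longrightarrow> 0 < u y \<Longrightarrow> u g \<le> u y"
    and x: "x \<noteq> 0"
  shows "u g dvd u x"
proof -
  obtain y where y: "y \<noteq> 0" "u y = (u x div u g) * u g" by (rule valuation_int_multiple[OF g(1)])
  have "u (x * inverse y) = u x mod u g"
    using valuation_mult[OF u x, of "inverse y"] valuation_inverse[OF u y(1)] y
    by (simp add: minus_div_mult_eq_mod)
  moreover have "0 \<le> u x mod u g" "u x mod u g < u g" using g(2) by simp_all
  ultimately have "u x mod u g = 0" using least[of "x * inverse y"] x y(1) by fastforce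
  thus ?thesis by (simp add: dvd_eq_mod_eq_0)
qed

lemma valuation_div:
  assumes e: "0 < e" and dvd: "\<And>x. x \<noteq> 0 \<Longrightarrow> e dvd u x"
  shows "valuation (\<lambda>x. u x div e)"
  unfolding valuation_def
proof (intro allI impI conjI)
  fix x y :: 'a assume xy: "x \<noteq> 0" "y \<noteq> 0"
  show "u (x * y) div e = u x div e + u y div e"
    using valuation_mult[OF u xy] dvd[OF xy(1)] by (simp add: div_plus_div_distrib_dvd_left)
  assume s: "x + y \<noteq> 0"
  have mono: "mono (\<lambda>a. a div e)" using e by (auto intro: monoI zdiv_mono1)
  have "min (u x) (u y) div e \<le> u (x + y) div e"
    using valuation_add[OF u xy s] e by (rule zdiv_mono1)
  thus "min (u x div e) (u y div e) \<le> u (x + y) div e"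
    using min_of_mono[OF mono, of "u x" "u y"] by simp
qed

lemma valuation_normalize:
  assumes f: "f \<noteq> 0" "u f \<noteq> 0"
  obtains e w where "e > 0" "discrete_valuation w" "\<And>x. x \<noteq> 0 \<Longrightarrow> u x = e * w x"
proof -
  have "\<exists>n. 0 < n \<and> (\<exists>g. g \<noteq> 0 \<and> u g = int n)"
  proof (cases "u f > 0")
    case True
    then show ?thesis using f by (intro exI[of _ "nat (u f)"]) auto
  next
    case False
    then show ?thesis using f valuation_inverse[OF u f(1)]
      by (intro exI[of _ "nat (- u f)"] conjI exI[of _ "inverse f"]) auto
  qed
  from LeastI_ex[OF this] obtain g where g: "g \<noteq> 0" "0 < u g"
    and least_def: "u g = int (LEAST n. 0 < n \<and> (\<exists>g. g \<noteq> 0 \<and> u g = int n))" by auto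
  have least: "u g \<le> u y" if "y \<noteq> 0" "0 < u y" for y
    using Least_le[of "\<lambda>n. 0 < n \<and> (\<exists>g. g \<noteq> 0 \<and> u g = int n)" "nat (u y)"] that
    unfolding least_def by force
  have dvd: "u g dvd u x" if "x \<noteq> 0" for x
    by (rule valuation_least_positive_dvd[OF g least that])
  have "\<exists>x. x \<noteq> 0 \<and> u x div u g = n" for n
  proof -
    obtain y where "y \<noteq> 0" "u y = n * u g" by (rule valuation_int_multiple[OF g(1)])
    thus ?thesis using g(2) by auto
  qed
  hence "discrete_valuation (\<lambda>x. u x div u g)"
    using valuation_div[OF g(2) dvd] by (simp add: discrete_valuation_def)
  thus ?thesis using that[of "u g"] g(2) dvd by auto
qed

end

section \<open>Algebraic elements and linear spans\<close>

definition subring :: "'a::comm_ring_1 set \<Rightarrow> bool" where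
  "subring S \<longleftrightarrow> 0 \<in> S \<and> 1 \<in> S \<and> (\<forall>x\<in>S. \<forall>y\<in>S. x + y \<in> S \<and> x * y \<in> S) \<and> (\<forall>x\<in>S. - x \<in> S)"

lemma subfield_imp_subring: "subfield S \<Longrightarrow> subring S"
  unfolding subfield_def subring_def by (metis diff_0)

context
  fixes S :: "'a::comm_ring_1 set"
  assumes S: "subring S"
begin

lemma subring_0 [simp]: "0 \<in> S"
  using S by (simp add: subring_def)

lemma subring_1 [simp]: "1 \<in> S"
  using S by (simp add: subring_def)

lemma subring_add: "x \<in> S \<Longrightarrow> y \<in> S \<Longrightarrow> x + y \<in> S"
  using S by (simp add: subring_def)

lemma subring_mult: "x \<in> S \<Longrightarrow> y \<in> S \<Longrightarrow> x * y \<in> S"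
  using S by (simp add: subring_def)

lemma subring_uminus: "x \<in> S \<Longrightarrow> - x \<in> S"
  using S by (simp add: subring_def)

lemma subring_diff: "x \<in> S \<Longrightarrow> y \<in> S \<Longrightarrow> x - y \<in> S"
  using subring_add subring_uminus by (metis diff_conv_add_uminus)

lemma subring_sum: "(\<And>i. i \<in> I \<Longrightarrow> f i \<in> S) \<Longrightarrow> (\<Sum>i\<in>I. f i) \<in> S"
  by (induction I rule: infinite_finite_induct) (auto intro: subring_add)

lemma subring_power: "x \<in> S \<Longrightarrow> x ^ n \<in> S"
  by (induction n) (auto intro: subring_mult)

lemma subring_of_nat: "of_nat n \<in> S"
  by (induction n) (auto intro: subring_add)

lemma subring_poly: "coeffs_in S P \<Longrightarrow> x \<in> S \<Longrightarrow> poly P x \<in> S"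
  unfolding poly_altdef coeffs_in_def by (auto intro!: subring_sum subring_mult subring_power)

lemma coeffs_in_0 [simp]: "coeffs_in S 0"
  by (simp add: coeffs_in_def)

lemma coeffs_in_1 [simp]: "coeffs_in S 1"
  by (simp add: coeffs_in_def coeff_1)

lemma coeffs_in_add: "coeffs_in S P \<Longrightarrow> coeffs_in S Q \<Longrightarrow> coeffs_in S (P + Q)"
  unfolding coeffs_in_def by (auto intro: subring_add)

lemma coeffs_in_diff: "coeffs_in S P \<Longrightarrow> coeffs_in S Q \<Longrightarrow> coeffs_in S (P - Q)"
  unfolding coeffs_in_def by (auto intro: subring_diff)

lemma coeffs_in_mult: "coeffs_in S P \<Longrightarrow> coeffs_in S Q \<Longrightarrow> coeffs_in S (P * Q)"
  unfolding coeffs_in_def coeff_mult by (auto intro!: subring_sum subring_mult)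

lemma coeffs_in_monom: "c \<in> S \<Longrightarrow> coeffs_in S (monom c n)"
  by (simp add: coeffs_in_def coeff_monom)

lemma coeffs_in_sum: "(\<And>i. i \<in> I \<Longrightarrow> coeffs_in S (f i)) \<Longrightarrow> coeffs_in S (\<Sum>i\<in>I. f i)"
  by (induction I rule: infinite_finite_induct) (auto intro: coeffs_in_add)

end

lemma coeffs_in_pCons: "coeffs_in S (pCons c P) \<longleftrightarrow> c \<in> S \<and> coeffs_in S P"
  unfolding coeffs_in_def by (auto simp: coeff_pCons split: nat.split)

lemma coeffs_in_mono: "coeffs_in S P \<Longrightarrow> S \<subseteq> T \<Longrightarrow> coeffs_in T P"
  unfolding coeffs_in_def by auto

definition algebraic_over :: "'a::comm_ring_1 set \<Rightarrow> 'a \<Rightarrow> bool" where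
  "algebraic_over S y \<longleftrightarrow> (\<exists>P. P \<noteq> 0 \<and> coeffs_in S P \<and> poly P y = 0)"

lemma algebraic_over_mono: "algebraic_over S y \<Longrightarrow> S \<subseteq> T \<Longrightarrow> algebraic_over T y"
  unfolding algebraic_over_def by (blast intro: coeffs_in_mono)

definition ring_adjoin :: "'a::comm_ring_1 set \<Rightarrow> 'a \<Rightarrow> 'a set" where
  "ring_adjoin S s = {poly P s | P. coeffs_in S P}"

lemma ring_adjoin_subset: "subring R \<Longrightarrow> S \<subseteq> R \<Longrightarrow> s \<in> R \<Longrightarrow> ring_adjoin S s \<subseteq> R"
  unfolding ring_adjoin_def by (blast intro: subring_poly coeffs_in_mono)

lemma ring_adjoin_iff: "x \<in> ring_adjoin S s \<longleftrightarrow> (\<exists>P. coeffs_in S P \<and> x = poly P s)"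
  by (auto simp: ring_adjoin_def)

lemma ring_adjoin_base: "subring S \<Longrightarrow> c \<in> S \<Longrightarrow> c \<in> ring_adjoin S s"
  unfolding ring_adjoin_iff by (intro exI[of _ "[:c:]"]) (simp add: coeffs_in_pCons)

lemma ring_adjoin_gen: "subring S \<Longrightarrow> s \<in> ring_adjoin S s"
  unfolding ring_adjoin_iff by (intro exI[of _ "[:0, 1:]"]) (simp add: coeffs_in_pCons)

lemma subring_ring_adjoin:
  assumes S: "subring S"
  shows "subring (ring_adjoin S s)"
proof -
  let ?R = "ring_adjoin S s"
  have "x + y \<in> ?R \<and> x * y \<in> ?R \<and> - x \<in> ?R" if xy: "x \<in> ?R" "y \<in> ?R" for x y
  proof -
    obtain P Q where PQ: "coeffs_in S P" "coeffs_in S Q" "x = poly P s" "y = poly Q s"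
      using xy unfolding ring_adjoin_iff by blast
    have "x + y = poly (P + Q) s" "x * y = poly (P * Q) s" "- x = poly (0 - P) s"
      by (simp_all add: PQ)
    moreover have "coeffs_in S (P + Q)" "coeffs_in S (P * Q)" "coeffs_in S (0 - P)"
      using PQ(1,2) coeffs_in_add[OF S] coeffs_in_mult[OF S] coeffs_in_diff[OF S] coeffs_in_0[OF S]
      by blast+
    ultimately show ?thesis unfolding ring_adjoin_iff by blast
  qed
  thus ?thesis
    using ring_adjoin_base[OF S subring_0[OF S]] ring_adjoin_base[OF S subring_1[OF S]]
    unfolding subring_def by blast
qed

text \<open>Strip the powers of the variable dividing the polynomial and read off its constant term.\<close>

lemma root_divides_nonzero_coeff:
  fixes z :: "'a::idom"
  assumes R: "subring R" and C: "C \<subseteq> R" and z: "z \<in> R" "z \<noteq> 0"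
  shows "coeffs_in C P \<Longrightarrow> P \<noteq> 0 \<Longrightarrow> poly P z = 0 \<Longrightarrow> \<exists>c\<in>C. c \<noteq> 0 \<and> (\<exists>h\<in>R. c = z * h)"
proof (induction P)
  case (pCons c P)
  have c: "c \<in> C" and P: "coeffs_in C P" using pCons.prems(1) by (auto simp: coeffs_in_pCons)
  show ?case
  proof (cases "c = 0")
    case True
    then show ?thesis using pCons z(2) P by auto
  next
    case False
    have "c = z * (- poly P z)" using pCons.prems(3) by (simp add: eq_neg_iff_add_eq_0)
    moreover have "- poly P z \<in> R"
      using subring_uminus[OF R subring_poly[OF R coeffs_in_mono[OF P C] z(1)]] .
    ultimately show ?thesis using c False by blast
  qed
qed simp

lemma root_top_power:
  fixes t :: "'a::field"
  assumes P: "P \<noteq> 0" "poly P t = 0"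
  shows "t ^ degree P = (\<Sum>m<degree P. (- coeff P m / lead_coeff P) * t ^ m)"
proof -
  have lc: "lead_coeff P \<noteq> 0" using P(1) by simp
  have "lead_coeff P * t ^ degree P = - (\<Sum>m<degree P. coeff P m * t ^ m)"
    using P(2) by (simp add: poly_altdef lessThan_Suc_atMost[symmetric] eq_neg_iff_add_eq_0 add.commute)
  moreover have "lead_coeff P * ((- coeff P m / lead_coeff P) * t ^ m) = - (coeff P m * t ^ m)" for m
    using lc by simp
  hence "lead_coeff P * (\<Sum>m<degree P. (- coeff P m / lead_coeff P) * t ^ m) =
      - (\<Sum>m<degree P. coeff P m * t ^ m)"
    by (simp add: sum_distrib_left sum_negf)
  ultimately have "lead_coeff P * t ^ degree P =
      lead_coeff P * (\<Sum>m<degree P. (- coeff P m / lead_coeff P) * t ^ m)"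
    by simp
  thus ?thesis using lc by simp
qed

lemma lead_coeff_times_root_integral:
  fixes f :: "'a::field"
  assumes R: "subring R" and P: "P \<noteq> 0" "coeffs_in R P" "poly P f = 0"
  obtains M where "lead_coeff M = 1" "coeffs_in R M" "poly M (lead_coeff P * f) = 0"
proof -
  define n where "n = degree P"
  define b where "b = lead_coeff P"
  have "n \<noteq> 0"
  proof
    assume "n = 0"
    hence P0: "[:coeff P 0:] = P" by (simp add: n_def degree_0_id)
    have "coeff P 0 = 0" using P(3) by (subst (asm) P0[symmetric]) simp
    thus False using P(1) P0 by simp
  qed
  define c where "c k = coeff P k * b ^ (n - 1 - k)" for k
  define M where "M = monom 1 n + (\<Sum>k<n. monom (c k) k)" \<comment> \<open>\<open>b\<^sup>n\<^sup>-\<^sup>1 P(X / b)\<close>\<close>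
  have "degree (\<Sum>k<n. monom (c k) k) \<le> n - 1"
    by (intro degree_sum_le) (auto intro: order.trans[OF degree_monom_le])
  hence "degree (\<Sum>k<n. monom (c k) k) < n" using \<open>n \<noteq> 0\<close> by linarith
  hence "lead_coeff M = 1"
    by (simp add: M_def degree_add_eq_left degree_monom_eq coeff_eq_0)
  moreover have "coeffs_in R M"
    unfolding M_def using P(2) subring_1[OF R]
    by (intro coeffs_in_add[OF R] coeffs_in_sum[OF R] coeffs_in_monom[OF R])
      (auto simp: c_def b_def coeffs_in_def intro: subring_mult[OF R] subring_power[OF R])
  moreover have "poly M (b * f) = b ^ (n - 1) * poly P f"
  proof -
    have "poly P f = b * f ^ n + (\<Sum>k<n. coeff P k * f ^ k)"
      by (simp add: poly_altdef n_def b_def lessThan_Suc_atMost[symmetric])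
    hence "b ^ (n - 1) * poly P f =
        b ^ (n - 1) * (b * f ^ n) + (\<Sum>k<n. b ^ (n - 1) * (coeff P k * f ^ k))"
      by (simp add: distrib_left sum_distrib_left)
    also have "b ^ (n - 1) * (b * f ^ n) = (b * f) ^ n"
      using \<open>n \<noteq> 0\<close> by (cases n) (simp_all add: power_mult_distrib mult_ac)
    also have "(\<Sum>k<n. b ^ (n - 1) * (coeff P k * f ^ k)) = (\<Sum>k<n. c k * (b * f) ^ k)"
      by (intro sum.cong) (simp_all add: c_def power_mult_distrib mult_ac flip: power_add)
    finally show ?thesis by (simp add: M_def poly_sum poly_monom)
  qed
  ultimately show thesis using that P(3) by (simp add: b_def)
qed

definition in_span :: "'a::field set \<Rightarrow> 'a set \<Rightarrow> 'a \<Rightarrow> bool" where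
  "in_span E T x \<longleftrightarrow> (\<exists>c. (\<forall>b\<in>T. c b \<in> E) \<and> x = (\<Sum>b\<in>T. c b * b))"

lemma finite_dim_over_iff: "finite_dim_over E \<longleftrightarrow> (\<exists>B. finite B \<and> (\<forall>x. in_span E B x))"
  unfolding finite_dim_over_def in_span_def by blast

context
  fixes E :: "'a::field set"
  assumes E: "subfield E"
begin

lemma subfield_subring: "subring E"
  by (rule subfield_imp_subring[OF E])

lemma subfield_inverse: "x \<in> E \<Longrightarrow> inverse x \<in> E"
  using E by (simp add: subfield_def)

lemma subfield_divide: "x \<in> E \<Longrightarrow> y \<in> E \<Longrightarrow> x / y \<in> E"
  by (simp add: divide_inverse subfield_inverse subring_mult[OF subfield_imp_subring[OF E]])

lemma inverse_in_ring_adjoin: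
  assumes g: "algebraic_over E g" "g \<noteq> 0"
  shows "inverse g \<in> ring_adjoin E g"
proof -
  have ES: "subring E" by (rule subfield_imp_subring[OF E])
  let ?R = "ring_adjoin E g"
  have R: "subring ?R" by (rule subring_ring_adjoin[OF ES])
  have ER: "E \<subseteq> ?R" using ring_adjoin_base[OF ES] by blast
  obtain c h where c: "c \<in> E" "c \<noteq> 0" and h: "h \<in> ?R" "c = g * h"
    using g root_divides_nonzero_coeff[OF R ER ring_adjoin_gen[OF ES] g(2)]
    unfolding algebraic_over_def by blast
  have "inverse g = inverse c * h" using h(2) c(2) g(2) by (simp add: field_simps)
  thus ?thesis using subring_mult[OF R] ER subfield_inverse[OF c(1)] h(1) by auto
qed

lemma in_span_0: "in_span E T 0"
  unfolding in_span_def by (rule exI[of _ "\<lambda>_. 0"]) (simp add: subfield_subring)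

lemma in_span_elem:
  assumes "finite T" "b \<in> T"
  shows "in_span E T b"
proof -
  have "(\<Sum>b'\<in>T. (if b' = b then 1 else 0) * b') = (\<Sum>b'\<in>T. if b' = b then b else 0)"
    by (rule sum.cong) auto
  also have "\<dots> = b" using assms by simp
  finally have "(\<Sum>b'\<in>T. (if b' = b then 1 else 0) * b') = b" .
  thus ?thesis unfolding in_span_def
    by (intro exI[of _ "\<lambda>b'. if b' = b then 1 else 0"]) (simp add: subfield_subring)
qed

lemma in_span_add:
  assumes "in_span E T x" "in_span E T y"
  shows "in_span E T (x + y)"
proof -
  obtain c where c: "\<forall>b\<in>T. c b \<in> E" "x = (\<Sum>b\<in>T. c b * b)"
    using assms(1) unfolding in_span_def by blast
  obtain d where d: "\<forall>b\<in>T. d b \<in> E" "y = (\<Sum>b\<in>T. d b * b)"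
    using assms(2) unfolding in_span_def by blast
  have "x + y = (\<Sum>b\<in>T. (c b + d b) * b)" by (simp add: c(2) d(2) sum.distrib distrib_right)
  thus ?thesis unfolding in_span_def
    by (intro exI[of _ "\<lambda>b. c b + d b"]) (use c(1) d(1) subring_add[OF subfield_subring] in auto)
qed

lemma in_span_smult:
  assumes "in_span E T x" "e \<in> E"
  shows "in_span E T (e * x)"
proof -
  obtain c where c: "\<forall>b\<in>T. c b \<in> E" "x = (\<Sum>b\<in>T. c b * b)"
    using assms(1) unfolding in_span_def by blast
  have "e * x = (\<Sum>b\<in>T. (e * c b) * b)" by (simp add: c(2) sum_distrib_left mult.assoc)
  thus ?thesis unfolding in_span_def
    by (intro exI[of _ "\<lambda>b. e * c b"]) (use c(1) assms(2) subring_mult[OF subfield_subring] in auto)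
qed

lemma in_span_diff: "in_span E T x \<Longrightarrow> in_span E T y \<Longrightarrow> in_span E T (x - y)"
  using in_span_add[of T x "(- 1) * y"] in_span_smult[of T y "- 1"]
    subring_uminus[OF subfield_subring subring_1[OF subfield_subring]] by simp

lemma in_span_sum: "(\<And>i. i \<in> I \<Longrightarrow> in_span E T (f i)) \<Longrightarrow> in_span E T (\<Sum>i\<in>I. f i)"
  by (induction I rule: infinite_finite_induct) (auto intro: in_span_add in_span_0)

lemma in_span_insert:
  assumes "finite T" "b \<notin> T" "in_span E (insert b T) x"
  obtains d where "d \<in> E" "in_span E T (x - d * b)"
proof -
  obtain c where c: "\<forall>b'\<in>insert b T. c b' \<in> E" "x = (\<Sum>b'\<in>insert b T. c b' * b')"
    using assms(3) unfolding in_span_def by blast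
  have "x - c b * b = (\<Sum>b'\<in>T. c b' * b')" using c(2) assms(1,2) by simp
  hence "in_span E T (x - c b * b)"
    unfolding in_span_def using c(1) by (intro exI[of _ c]) auto
  thus ?thesis using that c(1) by blast
qed

lemma dependent_after_elimination:
  assumes I: "finite I" "r \<in> I" and l: "\<And>i. i \<in> I \<Longrightarrow> l i \<in> E"
    and c: "\<forall>i\<in>I - {r}. c i \<in> E" "\<exists>i\<in>I - {r}. c i \<noteq> 0"
      "(\<Sum>i\<in>I - {r}. c i * (x i - l i * x r)) = 0"
  shows "\<exists>c'. (\<forall>i\<in>I. c' i \<in> E) \<and> (\<exists>i\<in>I. c' i \<noteq> 0) \<and> (\<Sum>i\<in>I. c' i * x i) = 0"
proof -
  define mu where "mu = (\<Sum>i\<in>I - {r}. c i * l i)"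
  define c' where "c' i = (if i = r then - mu else c i)" for i
  have "(\<Sum>i\<in>I. c' i * x i) = - mu * x r + (\<Sum>i\<in>I - {r}. c i * x i)"
    using I by (simp add: sum.remove c'_def)
  also have "(\<Sum>i\<in>I - {r}. c i * x i) = (\<Sum>i\<in>I - {r}. c i * (x i - l i * x r)) + mu * x r"
    by (simp add: mu_def right_diff_distrib sum_subtractf sum_distrib_right mult.assoc)
  finally have "(\<Sum>i\<in>I. c' i * x i) = 0" using c(3) by simp
  moreover have "mu \<in> E"
    unfolding mu_def using c(1) l
    by (auto intro!: subring_sum[OF subfield_subring] subring_mult[OF subfield_subring])
  hence "\<forall>i\<in>I. c' i \<in> E" using c(1) by (auto simp: c'_def intro: subring_uminus[OF subfield_subring])
  moreover have "\<exists>i\<in>I. c' i \<noteq> 0" using c(2) by (auto simp: c'_def)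
  ultimately show ?thesis by blast
qed

lemma in_span_dependent:
  assumes "finite T"
  shows "finite I \<Longrightarrow> card T < card I \<Longrightarrow> (\<forall>i\<in>I. in_span E T (x i)) \<Longrightarrow>
    \<exists>c. (\<forall>i\<in>I. c i \<in> E) \<and> (\<exists>i\<in>I. c i \<noteq> 0) \<and> (\<Sum>i\<in>I. c i * x i) = 0"
  using assms
proof (induction T arbitrary: I x rule: finite_induct)
  case empty
  then obtain i0 where i0: "i0 \<in> I" by fastforce
  have "\<forall>i\<in>I. x i = 0" using empty.prems(3) by (simp add: in_span_def)
  then show ?case using i0 subfield_subring
    by (intro exI[of _ "\<lambda>i. if i = i0 then 1 else 0"]) auto
next
  case (insert b T)
  have "\<forall>i\<in>I. \<exists>d. d \<in> E \<and> in_span E T (x i - d * b)"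
    using in_span_insert[OF insert.hyps(1,2)] insert.prems(3) by metis
  then obtain d where d: "\<And>i. i \<in> I \<Longrightarrow> d i \<in> E \<and> in_span E T (x i - d i * b)"
    by metis
  show ?case
  proof (cases "\<forall>i\<in>I. d i = 0")
    case True
    then show ?thesis using insert d by (intro insert.IH) auto
  next
    case False
    then obtain r where r: "r \<in> I" "d r \<noteq> 0" by blast
    define x' where "x' i = x i - (d i / d r) * x r" for i
    have "in_span E T (x' i)" if "i \<in> I" for i
    proof -
      have "(d i / d r) * (x r - d r * b) = (d i / d r) * x r - d i * b"
        using r(2) by (simp add: algebra_simps)
      hence x': "x' i = (x i - d i * b) - (d i / d r) * (x r - d r * b)" by (simp add: x'_def)
      have "in_span E T ((d i / d r) * (x r - d r * b))"
        by (rule in_span_smult) (use d[OF that] d[OF r(1)] subfield_divide in auto)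
      thus ?thesis unfolding x' using d[OF that] by (simp add: in_span_diff)
    qed
    moreover have "card T < card (I - {r})"
      using insert.prems(1,2) insert.hyps r(1) by (simp add: card_Diff_singleton)
    ultimately obtain c where c: "\<forall>i\<in>I - {r}. c i \<in> E" "\<exists>i\<in>I - {r}. c i \<noteq> 0"
      "(\<Sum>i\<in>I - {r}. c i * x' i) = 0"
      using insert.IH[of "I - {r}" x'] insert.prems(1) by auto
    moreover have "d i / d r \<in> E" if "i \<in> I" for i
      using d[OF that] d[OF r(1)] subfield_divide by blast
    ultimately show ?thesis
      using dependent_after_elimination[OF insert.prems(1) r(1), of "\<lambda>i. d i / d r" c x]
      by (simp add: x'_def)
  qed
qed

lemma poly_in_span:
  "coeffs_in E P \<Longrightarrow> (\<And>k. in_span E T (y ^ k)) \<Longrightarrow> in_span E T (poly P y)"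
  unfolding poly_altdef coeffs_in_def by (auto intro!: in_span_sum in_span_smult)

lemma algebraic_if_powers_in_span:
  assumes T: "finite T" and pow: "\<And>k. in_span E T (y ^ k)"
  shows "algebraic_over E y"
proof -
  obtain c where c: "\<forall>k\<le>card T. c k \<in> E" "\<exists>k\<le>card T. c k \<noteq> 0"
    "(\<Sum>k\<le>card T. c k * y ^ k) = 0"
    using in_span_dependent[OF T, of "{..card T}" "\<lambda>k. y ^ k"] pow by auto
  define P where "P = (\<Sum>k\<le>card T. monom (c k) k)"
  have "coeff P k = (if k \<le> card T then c k else 0)" for k
    by (simp add: P_def coeff_sum coeff_monom)
  hence "P \<noteq> 0" "coeffs_in E P"
    using c(1,2) subfield_subring by (auto simp: coeffs_in_def poly_eq_iff)
  moreover have "poly P y = 0" using c(3) by (simp add: P_def poly_sum poly_monom)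
  ultimately show ?thesis unfolding algebraic_over_def by blast
qed

lemma inverse_in_span_if_powers_in_span:
  assumes T: "finite T" and pow: "\<And>k. in_span E T (g ^ k)" and g: "g \<noteq> 0"
  shows "in_span E T (inverse g)"
proof -
  have "inverse g \<in> ring_adjoin E g"
    by (rule inverse_in_ring_adjoin[OF algebraic_if_powers_in_span[OF T pow] g])
  then obtain Q where "coeffs_in E Q" "inverse g = poly Q g" unfolding ring_adjoin_def by blast
  thus ?thesis using poly_in_span[OF _ pow] by metis
qed

lemma algebraic_if_finite_dim:
  assumes "finite_dim_over E"
  shows "algebraic_over E y"
proof -
  obtain B where "finite B" "\<And>x. in_span E B x"
    using assms unfolding finite_dim_over_iff by blast
  thus ?thesis by (rule algebraic_if_powers_in_span)
qed

end

section \<open>Function fields\<close>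

lemma rat_fun_field_iff: "x \<in> rat_fun_field S t \<longleftrightarrow>
    (\<exists>P Q. coeffs_in S P \<and> coeffs_in S Q \<and> poly Q t \<noteq> 0 \<and> x = poly P t / poly Q t)"
  unfolding rat_fun_field_def by blast

lemma ring_adjoin_subset_rat_fun_field:
  assumes S: "subring S"
  shows "ring_adjoin S t \<subseteq> rat_fun_field S t"
proof
  fix x assume "x \<in> ring_adjoin S t"
  then obtain P where "coeffs_in S P" "x = poly P t" unfolding ring_adjoin_iff by blast
  thus "x \<in> rat_fun_field S t"
    unfolding rat_fun_field_iff by (intro exI[of _ P] exI[of _ 1]) (simp add: S)
qed

context
  fixes S :: "'a::field set"
  assumes S: "subfield S"
begin

lemma rat_fun_field_subfield: "subfield (rat_fun_field S t)"
proof -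
  let ?R = "rat_fun_field S t"
  have SR: "subring S" by (rule subfield_imp_subring[OF S])
  have ring: "x + y \<in> ?R \<and> x - y \<in> ?R \<and> x * y \<in> ?R" if xy: "x \<in> ?R" "y \<in> ?R" for x y
  proof -
    obtain P1 Q1 where 1: "coeffs_in S P1" "coeffs_in S Q1" "poly Q1 t \<noteq> 0" "x = poly P1 t / poly Q1 t"
      using xy(1) unfolding rat_fun_field_iff by blast
    obtain P2 Q2 where 2: "coeffs_in S P2" "coeffs_in S Q2" "poly Q2 t \<noteq> 0" "y = poly P2 t / poly Q2 t"
      using xy(2) unfolding rat_fun_field_iff by blast
    have "x + y = poly (P1 * Q2 + P2 * Q1) t / poly (Q1 * Q2) t"
      "x - y = poly (P1 * Q2 - P2 * Q1) t / poly (Q1 * Q2) t"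
      "x * y = poly (P1 * P2) t / poly (Q1 * Q2) t"
      using 1(3) 2(3) by (simp_all add: 1(4) 2(4) add_frac_eq diff_frac_eq)
    moreover have "coeffs_in S (P1 * Q2 + P2 * Q1)" "coeffs_in S (P1 * Q2 - P2 * Q1)"
      "coeffs_in S (P1 * P2)" "coeffs_in S (Q1 * Q2)"
      using 1 2 by (auto intro!: coeffs_in_add[OF SR] coeffs_in_diff[OF SR] coeffs_in_mult[OF SR])
    moreover have "poly (Q1 * Q2) t \<noteq> 0" using 1(3) 2(3) by simp
    ultimately show ?thesis unfolding rat_fun_field_iff by blast
  qed
  have inv: "inverse x \<in> ?R" if x: "x \<in> ?R" for x
  proof -
    obtain P Q where PQ: "coeffs_in S P" "coeffs_in S Q" "poly Q t \<noteq> 0" "x = poly P t / poly Q t"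
      using x unfolding rat_fun_field_iff by blast
    show ?thesis
    proof (cases "poly P t = 0")
      case True
      then show ?thesis using x PQ(4) by simp
    next
      case False
      then show ?thesis using PQ unfolding rat_fun_field_iff by (intro exI[of _ Q] exI[of _ P]) simp
    qed
  qed
  have "0 \<in> ?R" "1 \<in> ?R"
    using ring_adjoin_subset_rat_fun_field[OF SR]
      ring_adjoin_base[OF SR subring_0[OF SR]] ring_adjoin_base[OF SR subring_1[OF SR]] by blast+
  thus ?thesis unfolding subfield_def using ring inv by blast
qed

lemma subset_rat_fun_field: "S \<subseteq> rat_fun_field S t"
  using ring_adjoin_base[OF subfield_imp_subring[OF S]]
    ring_adjoin_subset_rat_fun_field[OF subfield_imp_subring[OF S]] by blast

lemma rat_fun_field_common_denominator:
  "coeffs_in (rat_fun_field S s) P \<Longrightarrow>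
    \<exists>D\<in>ring_adjoin S s. D \<noteq> 0 \<and> coeffs_in (ring_adjoin S s) (smult D P)"
proof (induction P)
  case 0
  have SR: "subring S" by (rule subfield_imp_subring[OF S])
  have "0 \<in> ring_adjoin S s" "1 \<in> ring_adjoin S s"
    using ring_adjoin_base[OF SR subring_0[OF SR]] ring_adjoin_base[OF SR subring_1[OF SR]] .
  then show ?case by (intro bexI[of _ 1]) (simp_all add: coeffs_in_def)
next
  case (pCons c P)
  let ?R = "ring_adjoin S s"
  have R: "subring ?R" by (rule subring_ring_adjoin[OF subfield_imp_subring[OF S]])
  obtain D1 where D1: "D1 \<in> ?R" "D1 \<noteq> 0" "coeffs_in ?R (smult D1 P)"
    using pCons by (auto simp: coeffs_in_pCons)
  obtain A B where AB: "coeffs_in S A" "coeffs_in S B" "poly B s \<noteq> 0" "c = poly A s / poly B s"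
    using pCons.prems unfolding coeffs_in_pCons rat_fun_field_iff by blast
  have AB_R: "poly A s \<in> ?R" "poly B s \<in> ?R" using AB(1,2) by (auto simp: ring_adjoin_iff)
  have "coeffs_in ?R (smult (D1 * poly B s) P)"
    unfolding coeffs_in_def
  proof
    fix n
    have "poly B s * (D1 * coeff P n) \<in> ?R"
      by (rule subring_mult[OF R AB_R(2)]) (use D1(3) in \<open>simp add: coeffs_in_def\<close>)
    thus "coeff (smult (D1 * poly B s) P) n \<in> ?R" by (simp add: mult_ac)
  qed
  moreover have "D1 * poly B s * c \<in> ?R"
  proof -
    have eq: "D1 * poly B s * c = D1 * poly A s" using AB(3,4) by simp
    show ?thesis unfolding eq by (rule subring_mult[OF R D1(1) AB_R(1)])
  qed
  ultimately have "coeffs_in ?R (smult (D1 * poly B s) (pCons c P))"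
    by (simp add: coeffs_in_pCons)
  moreover have "D1 * poly B s \<in> ?R" "D1 * poly B s \<noteq> 0"
    using D1(1,2) AB(3) AB_R(2) subring_mult[OF R] by auto
  ultimately show ?case by blast
qed

lemma algebraic_over_ring_adjoin:
  assumes "algebraic_over (rat_fun_field S s) y"
  shows "algebraic_over (ring_adjoin S s) y"
proof -
  obtain P where P: "P \<noteq> 0" "coeffs_in (rat_fun_field S s) P" "poly P y = 0"
    using assms unfolding algebraic_over_def by blast
  obtain D where "D \<noteq> 0" "coeffs_in (ring_adjoin S s) (smult D P)"
    using rat_fun_field_common_denominator[OF P(2)] by blast
  thus ?thesis unfolding algebraic_over_def using P(1,3) by (intro exI[of _ "smult D P"]) simp
qed

end

lemma poly_swap_variables:
  fixes p :: "nat \<Rightarrow> 'a::comm_ring_1 poly"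
  assumes deg: "\<And>k. k \<le> n \<Longrightarrow> degree (p k) \<le> M"
  shows "(\<Sum>m\<le>M. poly (\<Sum>k\<le>n. monom (coeff (p k) m) k) s * t ^ m) = (\<Sum>k\<le>n. poly (p k) t * s ^ k)"
proof -
  have p_eval: "poly (p k) t = (\<Sum>m\<le>M. coeff (p k) m * t ^ m)" if "k \<le> n" for k
  proof -
    have "poly (p k) t = poly (\<Sum>m\<le>M. monom (coeff (p k) m) m) t"
      by (simp only: poly_as_sum_of_monoms'[OF deg[OF that]])
    thus ?thesis by (simp add: poly_sum poly_monom)
  qed
  have "(\<Sum>m\<le>M. poly (\<Sum>k\<le>n. monom (coeff (p k) m) k) s * t ^ m) =
      (\<Sum>m\<le>M. \<Sum>k\<le>n. coeff (p k) m * t ^ m * s ^ k)"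
    by (simp add: poly_sum poly_monom sum_distrib_left sum_distrib_right mult_ac)
  also have "\<dots> = (\<Sum>k\<le>n. \<Sum>m\<le>M. coeff (p k) m * t ^ m * s ^ k)"
    by (rule sum.swap)
  also have "\<dots> = (\<Sum>k\<le>n. poly (p k) t * s ^ k)"
    by (intro sum.cong) (simp_all add: p_eval sum_distrib_right)
  finally show ?thesis .
qed

text \<open>Read a polynomial relation between \<open>s\<close> and \<open>t\<close> as a polynomial in \<open>t\<close>; it stays
  nonzero because \<open>s\<close> is transcendental.\<close>

lemma algebraic_swap:
  assumes S: "subring S" and s: "transcendental_over S s"
    and alg: "algebraic_over (ring_adjoin S t) s"
  shows "algebraic_over (ring_adjoin S s) t"
proof -
  obtain P where P: "P \<noteq> 0" "coeffs_in (ring_adjoin S t) P" "poly P s = 0"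
    using alg unfolding algebraic_over_def by blast
  have "\<forall>k. \<exists>p. coeffs_in S p \<and> coeff P k = poly p t"
    using P(2) unfolding coeffs_in_def ring_adjoin_iff by blast
  then obtain p where p: "\<And>k. coeffs_in S (p k)" "\<And>k. coeff P k = poly (p k) t" by metis
  define n where "n = degree P"
  define M where "M = Max ((\<lambda>k. degree (p k)) ` {..n})"
  have deg: "degree (p k) \<le> M" if "k \<le> n" for k
    unfolding M_def using that by (intro Max_ge) auto
  define G where "G m = (\<Sum>k\<le>n. monom (coeff (p k) m) k)" for m
  define Q where "Q = (\<Sum>m\<le>M. monom (poly (G m) s) m)"
  have G: "coeffs_in S (G m)" for m
    unfolding G_def using p(1)
    by (intro coeffs_in_sum[OF S] coeffs_in_monom[OF S]) (simp add: coeffs_in_def)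
  have coeff_Q: "coeff Q m = (if m \<le> M then poly (G m) s else 0)" for m
    by (simp add: Q_def coeff_sum coeff_monom)
  have "poly Q t = (\<Sum>m\<le>M. poly (G m) s * t ^ m)"
    by (simp add: Q_def poly_sum poly_monom)
  also have "\<dots> = (\<Sum>k\<le>n. poly (p k) t * s ^ k)"
    unfolding G_def by (rule poly_swap_variables[OF deg])
  also have "\<dots> = 0" using P(3) by (simp add: poly_altdef n_def p(2))
  finally have "poly Q t = 0" .
  moreover have "Q \<noteq> 0"
  proof -
    have "p n \<noteq> 0" using P(1) p(2)[of n] by (auto simp: n_def)
    moreover have "coeff (G (degree (p n))) n = lead_coeff (p n)"
      by (simp add: G_def coeff_sum coeff_monom)
    ultimately have "G (degree (p n)) \<noteq> 0" by auto
    hence "poly (G (degree (p n))) s \<noteq> 0"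
      using s G unfolding transcendental_over_def by blast
    thus ?thesis using coeff_Q[of "degree (p n)"] deg[of n] by auto
  qed
  moreover have "coeffs_in (ring_adjoin S s) Q"
    unfolding coeffs_in_def coeff_Q using G ring_adjoin_base[OF S subring_0[OF S]]
    by (auto simp: ring_adjoin_iff)
  ultimately show ?thesis unfolding algebraic_over_def by blast
qed

lemma powers_in_span_of_algebraic:
  assumes E: "subfield E" and t: "algebraic_over E t"
  obtains T where "finite T" "\<And>k. in_span E T (t ^ k)"
    "\<And>y. in_span E T y \<Longrightarrow> in_span E T (t * y)"
proof -
  obtain P where P: "P \<noteq> 0" "coeffs_in E P" "poly P t = 0"
    using t unfolding algebraic_over_def by blast
  define d where "d = degree P"
  define T where "T = (\<lambda>m. t ^ m) ` {..<d}"
  define c where "c m = - coeff P m / lead_coeff P" for m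
  have c: "c m \<in> E" for m
    using P(2) subfield_divide[OF E] subring_uminus[OF subfield_subring[OF E]]
    by (simp add: c_def coeffs_in_def)
  have top: "t ^ d = (\<Sum>m<d. c m * t ^ m)"
    unfolding c_def d_def by (rule root_top_power[OF P(1,3)])
  have pow: "in_span E T (t ^ k)" for k
  proof (induction k rule: less_induct)
    case (less k)
    show ?case
    proof (cases "k < d")
      case True
      then show ?thesis using in_span_elem[OF E] by (simp add: T_def)
    next
      case False
      have "t ^ k = t ^ (k - d) * t ^ d" using False by (simp flip: power_add)
      also have "\<dots> = (\<Sum>m<d. c m * t ^ (m + (k - d)))"
        by (simp add: top sum_distrib_left power_add mult_ac)
      also have "in_span E T \<dots>"
        using False less.IH c by (intro in_span_sum[OF E] in_span_smult[OF E]) auto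
      finally show ?thesis .
    qed
  qed
  have "in_span E T (t * y)" if y: "in_span E T y" for y
  proof -
    obtain e where e: "\<forall>b\<in>T. e b \<in> E" "y = (\<Sum>b\<in>T. e b * b)"
      using y unfolding in_span_def by blast
    have "t * y = (\<Sum>b\<in>T. e b * (t * b))" by (simp add: e(2) sum_distrib_left mult_ac)
    moreover have "in_span E T (t * b)" if "b \<in> T" for b
      using that pow[of "Suc _"] by (auto simp: T_def)
    ultimately show ?thesis
      using e(1) by (simp add: in_span_sum[OF E] in_span_smult[OF E])
  qed
  with pow show thesis using that[of T] by (simp add: T_def)
qed

lemma rat_fun_field_in_span:
  assumes S: "subfield S" and E: "subfield E" and SE: "S \<subseteq> E" and t: "algebraic_over E t"
  obtains T where "finite T" "\<And>x. x \<in> rat_fun_field S t \<Longrightarrow> in_span E T x"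
proof -
  obtain T where T: "finite T" "\<And>k. in_span E T (t ^ k)"
    "\<And>y. in_span E T y \<Longrightarrow> in_span E T (t * y)"
    using powers_in_span_of_algebraic[OF E t] by blast
  have tpow: "in_span E T (t ^ m * y)" if "in_span E T y" for y m
    by (induction m) (use that T(3) in \<open>simp_all add: mult.assoc\<close>)
  have poly_mult: "in_span E T (poly Q t * y)" if "coeffs_in S Q" "in_span E T y" for Q y
  proof -
    have eq: "poly Q t * y = (\<Sum>i\<le>degree Q. coeff Q i * (t ^ i * y))"
      by (simp add: poly_altdef sum_distrib_left sum_distrib_right mult_ac)
    have "in_span E T (coeff Q i * (t ^ i * y))" for i
      using that SE tpow[OF that(2)] by (rule_tac in_span_smult[OF E]) (auto simp: coeffs_in_def)
    thus ?thesis unfolding eq by (intro in_span_sum[OF E])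
  qed
  have "in_span E T x" if x: "x \<in> rat_fun_field S t" for x
  proof -
    obtain P Q where PQ: "coeffs_in S P" "coeffs_in S Q" "poly Q t \<noteq> 0" "x = poly P t / poly Q t"
      using x unfolding rat_fun_field_iff by blast
    have "in_span E T (poly Q t ^ k)" for k
      by (induction k) (use T(2)[of 0] poly_mult[OF PQ(2)] in simp_all)
    hence "in_span E T (inverse (poly Q t))"
      using inverse_in_span_if_powers_in_span[OF E T(1) _ PQ(3)] by blast
    hence "in_span E T (poly P t * inverse (poly Q t))" by (rule poly_mult[OF PQ(1)])
    thus ?thesis by (simp add: PQ(4) divide_inverse)
  qed
  with T(1) show thesis using that by blast
qed

lemma finite_dim_over_tower:
  assumes E: "subfield E" and E': "finite_dim_over E'"
    and T: "finite T" "\<And>x. x \<in> E' \<Longrightarrow> in_span E T x"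
  shows "finite_dim_over E"
proof -
  obtain B where B: "finite B" "\<And>x. in_span E' B x"
    using E' unfolding finite_dim_over_iff by blast
  define TB where "TB = (\<lambda>(\<tau>, b). \<tau> * b) ` (T \<times> B)"
  have TB: "finite TB" using T(1) B(1) by (simp add: TB_def)
  have "in_span E TB x" for x
  proof -
    obtain c where c: "\<forall>b\<in>B. c b \<in> E'" "x = (\<Sum>b\<in>B. c b * b)"
      using B(2) unfolding in_span_def by blast
    have "in_span E TB (c b * b)" if b: "b \<in> B" for b
    proof -
      obtain e where e: "\<forall>\<tau>\<in>T. e \<tau> \<in> E" "c b = (\<Sum>\<tau>\<in>T. e \<tau> * \<tau>)"
        using T(2) c(1) b unfolding in_span_def by blast
      have "c b * b = (\<Sum>\<tau>\<in>T. e \<tau> * (\<tau> * b))" by (simp add: e(2) sum_distrib_right mult.assoc)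
      moreover have "in_span E TB (\<tau> * b)" if "\<tau> \<in> T" for \<tau>
        using in_span_elem[OF E TB] that b by (force simp: TB_def)
      ultimately show ?thesis
        using e(1) by (simp add: in_span_sum[OF E] in_span_smult[OF E])
    qed
    thus ?thesis unfolding c(2) by (rule in_span_sum[OF E])
  qed
  thus ?thesis using TB unfolding finite_dim_over_iff by blast
qed

lemma function_field_finite_dim_over:
  assumes Fq: "subfield Fq" and ff: "function_field_over Fq" and s: "transcendental_over Fq s"
  shows "finite_dim_over (rat_fun_field Fq s)"
proof -
  obtain t where fd: "finite_dim_over (rat_fun_field Fq t)"
    using ff unfolding function_field_over_def by blast
  have "algebraic_over (ring_adjoin Fq t) s"
    using algebraic_over_ring_adjoin[OF Fq
        algebraic_if_finite_dim[OF rat_fun_field_subfield[OF Fq] fd]] .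
  hence "algebraic_over (ring_adjoin Fq s) t"
    by (rule algebraic_swap[OF subfield_imp_subring[OF Fq] s])
  hence "algebraic_over (rat_fun_field Fq s) t"
    using ring_adjoin_subset_rat_fun_field[OF subfield_imp_subring[OF Fq]] by (rule algebraic_over_mono)
  then obtain T where "finite T" "\<And>x. x \<in> rat_fun_field Fq t \<Longrightarrow> in_span (rat_fun_field Fq s) T x"
    using rat_fun_field_in_span[OF Fq rat_fun_field_subfield[OF Fq] subset_rat_fun_field[OF Fq]] by blast
  thus ?thesis using finite_dim_over_tower[OF rat_fun_field_subfield[OF Fq] fd] by blast
qed

corollary function_field_algebraic_over_ring_adjoin:
  assumes "subfield Fq" "function_field_over Fq" "transcendental_over Fq s"
  shows "algebraic_over (ring_adjoin Fq s) y"
  using assms by (intro algebraic_over_ring_adjoin algebraic_if_finite_dim rat_fun_field_subfield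
      function_field_finite_dim_over)

section \<open>The ring \<open>A\<close>, homomorphisms and the Frobenius\<close>

lemma place_valuation: "place Fq w \<Longrightarrow> valuation w"
  by (simp add: place_def discrete_valuation_def)

lemma ring_A_iff:
  "f \<in> ring_A Fq vinf \<longleftrightarrow> (\<forall>w. place Fq w \<longrightarrow> \<not> same_val w vinf \<longrightarrow> f = 0 \<or> 0 \<le> w f)"
  by (simp add: ring_A_def)

lemma ring_A_subring: "subring (ring_A Fq vinf)"
proof -
  let ?A = "ring_A Fq vinf"
  have closed: "f + g \<in> ?A \<and> f * g \<in> ?A \<and> - f \<in> ?A" if fg: "f \<in> ?A" "g \<in> ?A" for f g
    unfolding ring_A_iff
  proof (intro conjI allI impI)
    fix w assume w: "place Fq w" "\<not> same_val w vinf"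
    have W: "valuation w" by (rule place_valuation[OF w(1)])
    have f: "f = 0 \<or> 0 \<le> w f" and g: "g = 0 \<or> 0 \<le> w g"
      using fg w unfolding ring_A_iff by auto
    show "f + g = 0 \<or> 0 \<le> w (f + g)"
      using f g valuation_add[OF W, of f g] by (cases "f = 0"; cases "g = 0"; cases "f + g = 0") auto
    show "f * g = 0 \<or> 0 \<le> w (f * g)"
      using f g valuation_mult[OF W, of f g] by (cases "f = 0"; cases "g = 0") auto
    show "- f = 0 \<or> 0 \<le> w (- f)"
      using f valuation_uminus[OF W, of f] by (cases "f = 0") auto
  qed
  have "1 \<in> ?A" by (auto simp: ring_A_iff valuation_one[OF place_valuation])
  moreover have "0 \<in> ?A" by (simp add: ring_A_iff)
  ultimately show ?thesis using closed unfolding subring_def by blast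
qed

lemma subset_ring_A: "Fq \<subseteq> ring_A Fq vinf"
  by (auto simp: ring_A_def place_def)

lemma ring_A_integrally_closed:
  assumes P: "lead_coeff P = 1" "coeffs_in (ring_A Fq vinf) P" "poly P z = 0"
  shows "z \<in> ring_A Fq vinf"
  unfolding ring_A_iff
proof (intro allI impI)
  fix w assume w: "place Fq w" "\<not> same_val w vinf"
  have W: "valuation w" by (rule place_valuation[OF w(1)])
  have "coeff P k = 0 \<or> w (lead_coeff P) \<le> w (coeff P k)" for k
    using P(1,2) w valuation_one[OF W] unfolding coeffs_in_def ring_A_iff by auto
  hence "\<not> (z \<noteq> 0 \<and> w z < 0)"
    using poly_nonzero_at_negative_valuation[OF W, of P z] P(1,3) by force
  thus "z = 0 \<or> 0 \<le> w z" by auto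
qed

lemma ring_A_fraction:
  assumes Fq: "subfield Fq" and ff: "function_field_over Fq"
    and t: "t \<in> ring_A Fq vinf" "transcendental_over Fq t"
  obtains b where "b \<in> ring_A Fq vinf" "b \<noteq> 0" "b * f \<in> ring_A Fq vinf"
proof -
  let ?A = "ring_A Fq vinf"
  have A: "subring ?A" by (rule ring_A_subring)
  have "algebraic_over ?A f"
    using function_field_algebraic_over_ring_adjoin[OF Fq ff t(2)]
      ring_adjoin_subset[OF A subset_ring_A t(1)] by (rule algebraic_over_mono)
  then obtain P where P: "P \<noteq> 0" "coeffs_in ?A P" "poly P f = 0"
    unfolding algebraic_over_def by blast
  obtain M where "lead_coeff M = 1" "coeffs_in ?A M" "poly M (lead_coeff P * f) = 0"
    by (rule lead_coeff_times_root_integral[OF A P])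
  hence "lead_coeff P * f \<in> ?A" by (rule ring_A_integrally_closed)
  moreover have "lead_coeff P \<in> ?A" "lead_coeff P \<noteq> 0" using P(1,2) by (auto simp: coeffs_in_def)
  ultimately show thesis using that by blast
qed

context
  fixes A :: "'a::field set" and i :: "'a \<Rightarrow> 'b::field"
  assumes A: "subring A" and i: "ring_hom_on A i"
begin

lemma ring_hom_on_1: "i 1 = 1"
  using i by (simp add: ring_hom_on_def)

lemma ring_hom_on_add: "a \<in> A \<Longrightarrow> b \<in> A \<Longrightarrow> i (a + b) = i a + i b"
  using i by (simp add: ring_hom_on_def)

lemma ring_hom_on_mult: "a \<in> A \<Longrightarrow> b \<in> A \<Longrightarrow> i (a * b) = i a * i b"
  using i by (simp add: ring_hom_on_def)

lemma ring_hom_on_0: "i 0 = 0"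
  using ring_hom_on_add[of 0 0] subring_0[OF A] by (metis add_cancel_right_right add_0)

lemma ring_hom_on_uminus: "a \<in> A \<Longrightarrow> i (- a) = - i a"
  using ring_hom_on_add[of a "- a"] subring_uminus[OF A, of a] ring_hom_on_0
  by (simp add: eq_neg_iff_add_eq_0 add.commute)

lemma ring_hom_on_diff: "a \<in> A \<Longrightarrow> b \<in> A \<Longrightarrow> i (a - b) = i a - i b"
  using ring_hom_on_add[of a "- b"] ring_hom_on_uminus[of b] subring_uminus[OF A, of b] by simp

lemma ring_hom_on_sum: "(\<And>k. k \<in> I \<Longrightarrow> f k \<in> A) \<Longrightarrow> i (\<Sum>k\<in>I. f k) = (\<Sum>k\<in>I. i (f k))"
  by (induction I rule: infinite_finite_induct)
    (auto simp: ring_hom_on_0 ring_hom_on_add subring_sum[OF A])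

lemma ring_hom_on_power: "a \<in> A \<Longrightarrow> i (a ^ n) = i a ^ n"
  by (induction n) (auto simp: ring_hom_on_1 ring_hom_on_mult subring_power[OF A])

lemma ring_hom_on_of_nat: "i (of_nat n) = of_nat n"
  by (induction n) (simp_all add: ring_hom_on_0 ring_hom_on_1 ring_hom_on_add subring_of_nat[OF A]
      subring_1[OF A])

lemma ring_hom_on_poly:
  assumes P: "coeffs_in A P" and a: "a \<in> A"
  shows "i (poly P a) = poly (map_poly i P) (i a)"
proof -
  have cA: "coeff P k \<in> A" for k using P by (simp add: coeffs_in_def)
  have "i (poly P a) = (\<Sum>k\<le>degree P. i (coeff P k) * i a ^ k)"
    unfolding poly_altdef using cA a
    by (simp add: ring_hom_on_sum ring_hom_on_mult ring_hom_on_power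
        subring_mult[OF A] subring_power[OF A])
  also have "\<dots> = poly (\<Sum>k\<le>degree P. monom (coeff (map_poly i P) k) k) (i a)"
    by (simp add: poly_sum poly_monom coeff_map_poly ring_hom_on_0)
  also have "\<dots> = poly (map_poly i P) (i a)"
    by (simp only: poly_as_sum_of_monoms'[OF map_poly_degree_leq])
  finally show ?thesis .
qed

end

context
  fixes j :: "'a::field \<Rightarrow> 'b::field"
  assumes j: "field_hom j"
begin

lemma field_hom_1: "j 1 = 1"
  using j by (simp add: field_hom_def)

lemma field_hom_add: "j (x + y) = j x + j y"
  using j by (simp add: field_hom_def)

lemma field_hom_mult: "j (x * y) = j x * j y"
  using j by (simp add: field_hom_def)

lemma field_hom_0: "j 0 = 0"
  using field_hom_add[of 0 0] by (metis add_cancel_right_right add_0)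

lemma field_hom_uminus: "j (- x) = - j x"
  using field_hom_add[of x "- x"] field_hom_0 by (simp add: eq_neg_iff_add_eq_0 add.commute)

lemma field_hom_diff: "j (x - y) = j x - j y"
  using field_hom_add[of x "- y"] field_hom_uminus[of y] by simp

lemma field_hom_power: "j (x ^ n) = j x ^ n"
  by (induction n) (simp_all add: field_hom_1 field_hom_mult)

lemma field_hom_sum: "j (\<Sum>k\<in>I. f k) = (\<Sum>k\<in>I. j (f k))"
  by (induction I rule: infinite_finite_induct) (simp_all add: field_hom_0 field_hom_add)

lemma field_hom_of_nat: "j (of_nat n) = of_nat n"
  by (induction n) (simp_all add: field_hom_0 field_hom_1 field_hom_add)

lemma field_hom_eq_0_iff: "j x = 0 \<longleftrightarrow> x = 0"
proof
  assume "j x = 0"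
  thus "x = 0"
    using field_hom_mult[of x "inverse x"] field_hom_1 by (cases "x = 0") auto
qed (simp add: field_hom_0)

lemma degree_map_poly_field_hom: "degree (map_poly j f) = degree f"
  by (rule degree_map_poly) (simp add: field_hom_eq_0_iff)

lemma map_poly_field_hom_add: "map_poly j (f + g) = map_poly j f + map_poly j g"
  by (simp add: poly_eq_iff coeff_map_poly field_hom_0 field_hom_add)

lemma map_poly_field_hom_mult: "map_poly j (f * g) = map_poly j f * map_poly j g"
  by (simp add: poly_eq_iff coeff_map_poly coeff_mult field_hom_0 field_hom_sum field_hom_mult)

lemma map_poly_field_hom_sum: "map_poly j (\<Sum>k\<in>I. f k) = (\<Sum>k\<in>I. map_poly j (f k))"
  by (induction I rule: infinite_finite_induct) (simp_all add: map_poly_field_hom_add)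

lemma map_poly_tmult:
  assumes q: "0 < q"
  shows "map_poly j (tmult q f g) = tmult q (map_poly j f) (map_poly j g)"
proof -
  have frob: "map_poly j (map_poly (\<lambda>c. c ^ (q ^ k)) g) = map_poly (\<lambda>c. c ^ (q ^ k)) (map_poly j g)"
    for k using q by (simp add: map_poly_map_poly field_hom_0 field_hom_power o_def)
  have "map_poly j (tmult q f g) =
      (\<Sum>k\<le>degree f. monom (j (coeff f k)) k * map_poly j (map_poly (\<lambda>c. c ^ (q ^ k)) g))"
    unfolding tmult_def
    by (simp add: map_poly_field_hom_sum map_poly_field_hom_mult map_poly_monom field_hom_0)
  also have "\<dots> = tmult q (map_poly j f) (map_poly j g)"
    unfolding tmult_def frob by (simp add: degree_map_poly_field_hom coeff_map_poly field_hom_0)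
  finally show ?thesis .
qed

end

context
  fixes A :: "'a::field set" and i :: "'a \<Rightarrow> 'b::field" and v :: "'b \<Rightarrow> int"
  assumes A: "subring A" and i: "ring_hom_on A i" and inj: "\<And>a. a \<in> A \<Longrightarrow> a \<noteq> 0 \<Longrightarrow> i a \<noteq> 0"
    and v: "valuation v" and frac: "\<And>f. \<exists>b\<in>A. b \<noteq> 0 \<and> b * f \<in> A"
begin

definition fraction_valuation :: "'a \<Rightarrow> int" where
  "fraction_valuation f =
     (let b = SOME b. b \<in> A \<and> b \<noteq> 0 \<and> b * f \<in> A in v (i (b * f)) - v (i b))"

lemma fraction_valuation_eq:
  assumes f: "f \<noteq> 0" and b: "b \<in> A" "b \<noteq> 0" "b * f \<in> A"
  shows "fraction_valuation f = v (i (b * f)) - v (i b)"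
proof -
  define b' where "b' = (SOME b. b \<in> A \<and> b \<noteq> 0 \<and> b * f \<in> A)"
  have b': "b' \<in> A" "b' \<noteq> 0" "b' * f \<in> A"
    unfolding b'_def by (rule someI2_ex[OF frac[of f, unfolded Bex_def]]; blast)+
  have "i b' * i (b * f) = i b * i (b' * f)"
    using b b' ring_hom_on_mult[OF A i] by (metis mult.left_commute)
  moreover have "i b' \<noteq> 0" "i (b * f) \<noteq> 0" "i b \<noteq> 0" "i (b' * f) \<noteq> 0"
    using b b' f inj by auto
  ultimately have "v (i b') + v (i (b * f)) = v (i b) + v (i (b' * f))"
    using valuation_mult[OF v] by metis
  thus ?thesis by (simp add: fraction_valuation_def b'_def[symmetric] Let_def)
qed

lemma fraction_valuation_on_A: "a \<in> A \<Longrightarrow> a \<noteq> 0 \<Longrightarrow> fraction_valuation a = v (i a)"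
  using fraction_valuation_eq[of a 1] subring_1[OF A]
  by (simp add: ring_hom_on_1[OF A i] valuation_one[OF v])

lemma valuation_fraction_valuation: "valuation fraction_valuation"
  unfolding valuation_def
proof (intro allI impI conjI)
  fix f g :: 'a assume fg: "f \<noteq> 0" "g \<noteq> 0"
  obtain bf bg where bf: "bf \<in> A" "bf \<noteq> 0" "bf * f \<in> A" and bg: "bg \<in> A" "bg \<noteq> 0" "bg * g \<in> A"
    using frac by blast
  have b: "bf * bg \<in> A" "bf * bg \<noteq> 0" using bf bg subring_mult[OF A] by auto
  have nz: "i bf \<noteq> 0" "i bg \<noteq> 0" "i (bf * f) \<noteq> 0" "i (bg * g) \<noteq> 0"
    using bf bg fg inj by auto
  have ib: "i (bf * bg) = i bf * i bg" using bf bg by (simp add: ring_hom_on_mult[OF A i])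
  have fv: "fraction_valuation f = v (i (bf * f)) - v (i bf)"
    "fraction_valuation g = v (i (bg * g)) - v (i bg)"
    using fraction_valuation_eq fg bf bg by auto
  have fgA: "(bf * bg) * (f * g) = (bf * f) * (bg * g)" by (simp add: mult_ac)
  show "fraction_valuation (f * g) = fraction_valuation f + fraction_valuation g"
    using fraction_valuation_eq[of "f * g" "bf * bg"] fg b bf bg nz fv ib subring_mult[OF A]
    unfolding fgA by (simp add: ring_hom_on_mult[OF A i] valuation_mult[OF v])
  assume s: "f + g \<noteq> 0"
  have sA: "(bf * bg) * (f + g) = bg * (bf * f) + bf * (bg * g)" by (simp add: algebra_simps)
  have "i ((bf * bg) * (f + g)) = i bg * i (bf * f) + i bf * i (bg * g)"
    unfolding sA using bf bg subring_mult[OF A]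
    by (simp add: ring_hom_on_add[OF A i] ring_hom_on_mult[OF A i])
  moreover have sumA: "(bf * bg) * (f + g) \<in> A"
    unfolding sA using subring_mult[OF A bg(1) bf(3)] subring_mult[OF A bf(1) bg(3)]
    by (rule subring_add[OF A])
  moreover have "i ((bf * bg) * (f + g)) \<noteq> 0" using inj[OF sumA] b(2) s by simp
  ultimately have "min (v (i bg) + v (i (bf * f))) (v (i bf) + v (i (bg * g))) \<le>
      v (i ((bf * bg) * (f + g)))"
    using valuation_add[OF v, of "i bg * i (bf * f)" "i bf * i (bg * g)"] nz
    by (simp add: valuation_mult[OF v])
  thus "min (fraction_valuation f) (fraction_valuation g) \<le> fraction_valuation (f + g)"
    using fraction_valuation_eq[OF s b sumA] fv ib nz
    by (simp add: valuation_mult[OF v])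
qed

end

context
  fixes Fq :: "'a::field set" and q :: nat
  assumes Fq: "subfield Fq" "finite Fq" "card Fq = q"
begin

lemma finite_field_card_ge_2: "2 \<le> q"
proof -
  have "{0, 1} \<subseteq> Fq" using subfield_subring[OF Fq(1)] by simp
  hence "card {0::'a, 1} \<le> card Fq" using Fq(2) by (rule card_mono[rotated])
  thus ?thesis using Fq(3) by simp
qed

lemma finite_field_power_card_minus_1:
  assumes c: "c \<in> Fq" "c \<noteq> 0"
  shows "c ^ (q - 1) = 1"
proof -
  define U where "U = Fq - {0}"
  have U: "finite U" "card U = q - 1"
    using Fq subfield_subring[OF Fq(1)] by (simp_all add: U_def card_Diff_singleton)
  have "(\<lambda>x. c * x) ` U = U"
  proof
    show "(\<lambda>x. c * x) ` U \<subseteq> U"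
      using c subring_mult[OF subfield_subring[OF Fq(1)]] by (auto simp: U_def)
    show "U \<subseteq> (\<lambda>x. c * x) ` U"
    proof
      fix y assume y: "y \<in> U"
      have "y = c * (inverse c * y)" using c by simp
      moreover have "inverse c * y \<in> U"
        using y c subring_mult[OF subfield_subring[OF Fq(1)]] subfield_inverse[OF Fq(1)]
        by (auto simp: U_def)
      ultimately show "y \<in> (\<lambda>x. c * x) ` U" by blast
    qed
  qed
  moreover have "inj_on (\<lambda>x. c * x) U" using c by (auto simp: inj_on_def)
  ultimately have "(\<Prod>x\<in>U. x) = (\<Prod>x\<in>U. c * x)"
    using prod.reindex[of "\<lambda>x. c * x" U "\<lambda>y. y"] by simp
  also have "\<dots> = c ^ card U * (\<Prod>x\<in>U. x)" by (simp add: prod.distrib)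
  finally show ?thesis using U by (simp add: U_def)
qed

lemma finite_field_power_card: "c \<in> Fq \<Longrightarrow> c ^ q = c"
  using finite_field_power_card_minus_1[of c] finite_field_card_ge_2
  by (cases "c = 0") (simp_all add: power_eq_if)

text \<open>The polynomial \<open>(1 + X)^q - X^q - 1\<close> has degree below \<open>q\<close> but vanishes on all of \<open>Fq\<close>.\<close>

lemma finite_field_binomial_eq_0:
  assumes k: "0 < k" "k < q"
  shows "(of_nat (q choose k) :: 'a) = 0"
proof -
  define D :: "'a poly" where "D = [:1, 1:] ^ q - monom 1 q - 1"
  have "1 + x \<in> Fq" if "x \<in> Fq" for x
    using subring_add[OF subfield_subring[OF Fq(1)] subring_1[OF subfield_subring[OF Fq(1)]] that] .
  hence roots: "Fq \<subseteq> {x. poly D x = 0}"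
    using finite_field_power_card by (auto simp: D_def poly_monom add.commute)
  have "coeff D n = 0" if "q \<le> n" for n
    using that finite_field_card_ge_2 coeff_linear_power[of "1::'a" q] degree_linear_power[of "1::'a" q]
    by (cases "n = q") (simp_all add: D_def coeff_monom coeff_eq_0 coeff_1)
  hence "D = 0 \<or> degree D < q"
    by (metis leading_coeff_0_iff not_less)
  moreover have "card Fq \<le> degree D" if "D \<noteq> 0"
    using card_mono[OF poly_roots_finite[OF that] roots] card_poly_roots_bound[OF that] by simp
  ultimately have "D = 0" using Fq(3) by fastforce
  hence "coeff D k = 0" by simp
  thus ?thesis
    using k coeff_linear_poly_power[of k q "1::'a" 1] by (simp add: D_def coeff_monom coeff_1)
qed

end

lemma frobenius_add:
  assumes "\<And>k. 0 < k \<Longrightarrow> k < q \<Longrightarrow> (of_nat (q choose k) :: 'a::comm_ring_1) = 0" and "0 < q"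
  shows "(x + y) ^ q = x ^ q + (y :: 'a) ^ q"
proof -
  have "(x + y) ^ q = (\<Sum>k\<le>q. of_nat (q choose k) * x ^ k * y ^ (q - k))"
    by (rule binomial_ring)
  also have "\<dots> = (\<Sum>k\<in>{0, q}. of_nat (q choose k) * x ^ k * y ^ (q - k))"
    by (rule sum.mono_neutral_right) (use assms in auto)
  also have "\<dots> = x ^ q + y ^ q" using assms(2) by simp
  finally show ?thesis .
qed

section \<open>Twisted polynomials\<close>

lemma tmult_0_left [simp]: "tmult q 0 g = 0"
  by (simp add: tmult_def)

lemma tmult_0_right [simp]: "tmult q f 0 = 0"
  by (simp add: tmult_def)

lemma tmult_nonzero:
  fixes f g :: "'a::field poly"
  assumes q: "0 < q" and f: "f \<noteq> 0" and g: "g \<noteq> 0"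
  shows "tmult q f g \<noteq> 0 \<and> degree (tmult q f g) = degree f + degree g"
proof -
  define T where "T k = monom (coeff f k) k * map_poly (\<lambda>c. c ^ (q ^ k)) g" for k
  have tm: "tmult q f g = (\<Sum>k\<le>degree f. T k)" by (simp add: tmult_def T_def)
  have deg_map: "degree (map_poly (\<lambda>c. c ^ (q ^ k)) g) = degree g" for k
    by (rule degree_map_poly) simp
  have degT: "degree (T k) \<le> k + degree g" for k
  proof -
    have "degree (T k) \<le> degree (monom (coeff f k) k) + degree (map_poly (\<lambda>c. c ^ (q ^ k)) g)"
      unfolding T_def by (rule degree_mult_le)
    thus ?thesis using degree_monom_le[of "coeff f k" k] by (simp add: deg_map)
  qed
  have "degree (tmult q f g) \<le> degree f + degree g"
    unfolding tm by (rule degree_sum_le) (auto intro: order.trans[OF degT])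
  moreover have "coeff (T k) (degree f + degree g) =
      (if k = degree f then lead_coeff f * lead_coeff g ^ (q ^ degree f) else 0)" if "k \<le> degree f" for k
  proof (cases "k = degree f")
    case True
    then show ?thesis using q by (simp add: T_def coeff_monom_mult coeff_map_poly)
  next
    case False
    hence "degree (T k) < degree f + degree g" using that degT[of k] by linarith
    then show ?thesis using False by (simp add: coeff_eq_0)
  qed
  hence "coeff (tmult q f g) (degree f + degree g) =
      (\<Sum>k\<le>degree f. if k = degree f then lead_coeff f * lead_coeff g ^ (q ^ degree f) else 0)"
    unfolding tm coeff_sum by (intro sum.cong) simp_all
  hence "coeff (tmult q f g) (degree f + degree g) = lead_coeff f * lead_coeff g ^ (q ^ degree f)"
    by simp
  hence top: "coeff (tmult q f g) (degree f + degree g) \<noteq> 0" using f g by simp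
  ultimately show ?thesis using le_degree[OF top] by auto
qed

context
  fixes q :: nat
  assumes q: "2 \<le> q" and frob: "\<And>x y :: 'a::field. (x + y) ^ q = x ^ q + y ^ q"
begin

lemma frobenius_power_add: "(x + y) ^ (q ^ n) = x ^ (q ^ n) + (y :: 'a) ^ (q ^ n)"
  by (induction n arbitrary: x y) (simp_all add: power_mult frob)

lemma frobenius_power_0: "(0 :: 'a) ^ (q ^ n) = 0"
  using q by simp

lemma frobenius_power_sum: "(\<Sum>k\<in>I. f k) ^ (q ^ n) = (\<Sum>k\<in>I. (f k :: 'a) ^ (q ^ n))"
  by (induction I rule: infinite_finite_induct) (simp_all add: frobenius_power_0 frobenius_power_add)

lemma tau_eval_0_poly [simp]: "tau_eval q 0 x = 0"
  by (simp add: tau_eval_def)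

lemma tau_eval_at_0 [simp]: "tau_eval q f (0 :: 'a) = 0"
  by (simp add: tau_eval_def frobenius_power_0)

lemma tau_eval_upto:
  assumes "degree f \<le> N"
  shows "tau_eval q f x = (\<Sum>n\<le>N. coeff f n * (x :: 'a) ^ (q ^ n))"
  unfolding tau_eval_def by (rule sum.mono_neutral_left) (use assms in \<open>auto simp: coeff_eq_0\<close>)

lemma tau_eval_plus: "tau_eval q (f + g) x = tau_eval q f x + tau_eval q g (x :: 'a)"
proof -
  define N where "N = max (degree f) (degree g)"
  have "degree (f + g) \<le> N" "degree f \<le> N" "degree g \<le> N"
    by (simp_all add: N_def degree_add_le)
  thus ?thesis by (simp add: tau_eval_upto distrib_right sum.distrib)
qed

lemma tau_eval_sum: "tau_eval q (\<Sum>k\<in>I. f k) x = (\<Sum>k\<in>I. tau_eval q (f k) (x :: 'a))"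
  by (induction I rule: infinite_finite_induct) (simp_all add: tau_eval_plus)

lemma tau_eval_monom_mult:
  "tau_eval q (monom c k * map_poly (\<lambda>c. c ^ (q ^ k)) g) x = c * tau_eval q g (x :: 'a) ^ (q ^ k)"
proof -
  define h where "h = map_poly (\<lambda>c. c ^ (q ^ k)) g"
  have h: "degree h = degree g" "coeff h m = coeff g m ^ (q ^ k)" for m
    using q by (simp_all add: h_def degree_map_poly coeff_map_poly)
  have deg: "degree (monom c k * h) \<le> k + degree g"
    using degree_mult_le[of "monom c k" h] degree_monom_le[of c k] h(1) by simp
  have "tau_eval q (monom c k * h) x = (\<Sum>n\<le>k + degree g. coeff (monom c k * h) n * x ^ (q ^ n))"
    by (rule tau_eval_upto[OF deg])
  also have "\<dots> = (\<Sum>n\<in>(\<lambda>m. m + k) ` {..degree g}. coeff (monom c k * h) n * x ^ (q ^ n))"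
  proof (rule sum.mono_neutral_right)
    show "\<forall>n\<in>{..k + degree g} - (\<lambda>m. m + k) ` {..degree g}. coeff (monom c k * h) n * x ^ (q ^ n) = 0"
    proof
      fix n assume n: "n \<in> {..k + degree g} - (\<lambda>m. m + k) ` {..degree g}"
      have "n < k"
      proof (rule ccontr)
        assume "\<not> n < k"
        hence "n = (n - k) + k" "n - k \<le> degree g" using n by auto
        thus False using n by blast
      qed
      thus "coeff (monom c k * h) n * x ^ (q ^ n) = 0" by (simp add: coeff_monom_mult)
    qed
  qed auto
  also have "\<dots> = (\<Sum>m\<le>degree g. c * (coeff g m * x ^ (q ^ m)) ^ (q ^ k))"
    by (subst sum.reindex) (auto simp: inj_on_def coeff_monom_mult h power_mult_distrib power_add
        power_mult mult.commute[of "q ^ k"] mult.assoc)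
  also have "\<dots> = c * tau_eval q g x ^ (q ^ k)"
    by (simp add: tau_eval_def frobenius_power_sum sum_distrib_left)
  finally show ?thesis by (simp add: h_def)
qed

lemma tau_eval_tmult: "tau_eval q (tmult q f g) x = tau_eval q f (tau_eval q g (x :: 'a))"
  by (simp add: tmult_def tau_eval_sum tau_eval_monom_mult tau_eval_def[of q f])

lemma tau_eval_roots_finite:
  assumes f: "f \<noteq> 0"
  shows "finite {x :: 'a. tau_eval q f x = 0}"
proof -
  define P where "P = (\<Sum>n\<le>degree f. monom (coeff f n) (q ^ n))"
  have inj: "q ^ n = q ^ m \<longleftrightarrow> n = m" for n m using q by (simp add: power_inject_exp)
  have "coeff P (q ^ degree f) = (\<Sum>n\<le>degree f. if n = degree f then coeff f n else 0)"
    unfolding P_def coeff_sum by (rule sum.cong) (auto simp: coeff_monom inj)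
  hence "P \<noteq> 0" using f by auto
  moreover have "poly P x = tau_eval q f x" for x
    by (simp add: P_def tau_eval_def poly_sum poly_monom)
  ultimately show ?thesis using poly_roots_finite[of P] by simp
qed

end

definition low_degree :: "'a::zero poly \<Rightarrow> nat" where
  "low_degree f = (LEAST n. coeff f n \<noteq> 0)"

lemma low_degree:
  assumes "f \<noteq> 0"
  shows "coeff f (low_degree f) \<noteq> 0" "low_degree f \<le> degree f" "n < low_degree f \<Longrightarrow> coeff f n = 0"
proof -
  have ex: "coeff f (degree f) \<noteq> 0" using assms by simp
  show "coeff f (low_degree f) \<noteq> 0"
    unfolding low_degree_def by (rule LeastI[of "\<lambda>n. coeff f n \<noteq> 0", OF ex])
  show "low_degree f \<le> degree f"
    unfolding low_degree_def by (rule Least_le[of "\<lambda>n. coeff f n \<noteq> 0", OF ex])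
  show "n < low_degree f \<Longrightarrow> coeff f n = 0" unfolding low_degree_def using not_less_Least by blast
qed

lemma low_degree_eq_0: "coeff f 0 \<noteq> 0 \<Longrightarrow> low_degree f = 0"
  by (simp add: low_degree_def Least_eq_0)

text \<open>Beyond this radius the Newton polygon of a twisted polynomial has become a single
  segment: the term of lowest index dominates.\<close>

definition tau_radius :: "('a::zero \<Rightarrow> 'b::linordered_idom) \<Rightarrow> 'a poly \<Rightarrow> 'b" where
  "tau_radius w f = 1 + (\<Sum>n\<le>degree f. \<bar>w (coeff f n)\<bar>)"

lemma tau_radius_ge:
  assumes "N \<subseteq> {..degree f}"
  shows "(\<Sum>n\<in>N. \<bar>w (coeff f n)\<bar>) + 1 \<le> tau_radius w f"
  using sum_mono2[OF finite_atMost assms, of "\<lambda>n. \<bar>w (coeff f n)\<bar>"] by (simp add: tau_radius_def)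

lemma tau_radius_ge_1: "1 \<le> tau_radius w f"
  using tau_radius_ge[of "{}" f w] by simp

context
  fixes w :: "'a::field \<Rightarrow> 'b::linordered_idom" and q :: nat
  assumes w: "valuation w" and q: "2 \<le> q"
begin

lemma valuation_tau_term:
  assumes "c \<noteq> 0" "y \<noteq> 0"
  shows "c * y ^ (q ^ n) \<noteq> 0 \<and> w (c * y ^ (q ^ n)) = w c + of_nat (q ^ n) * w y"
  using assms by (simp add: valuation_mult[OF w] valuation_power[OF w])

lemma tau_eval_low_term_dominates:
  assumes f: "f \<noteq> 0" and y: "y \<noteq> 0" "tau_radius w f \<le> w y"
  shows "tau_eval q f y \<noteq> 0 \<and>
    w (tau_eval q f y) = w (coeff f (low_degree f)) + of_nat (q ^ low_degree f) * w y"
proof -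
  define m where "m = low_degree f"
  define T where "T n = coeff f n * y ^ (q ^ n)" for n
  note m = low_degree[OF f, folded m_def]
  have Tm: "T m \<noteq> 0" "w (T m) = w (coeff f m) + of_nat (q ^ m) * w y"
    using valuation_tau_term[OF m(1) y(1)] by (auto simp: T_def)
  have wy: "1 \<le> w y" using tau_radius_ge_1[of w f] y(2) by simp
  have "val_gt w (w (T m)) (\<Sum>n\<in>{..degree f} - {m}. T n)"
  proof (rule val_gt_sum[OF w])
    fix n assume n: "n \<in> {..degree f} - {m}"
    show "val_gt w (w (T m)) (T n)"
    proof (cases "coeff f n = 0")
      case False
      have "m < n" using n m(3)[of n] False by (cases "n < m") auto
      hence "q ^ m < q ^ n" using q by (intro power_strict_increasing) auto
      hence "q ^ m + 1 \<le> q ^ n" by simp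
      hence "of_nat (q ^ m) + 1 \<le> (of_nat (q ^ n) :: 'b)" by (metis of_nat_1 of_nat_add of_nat_le_iff)
      hence "(of_nat (q ^ m) + 1) * w y \<le> of_nat (q ^ n) * w y" using wy by (intro mult_right_mono) auto
      moreover have "\<bar>w (coeff f n)\<bar> + \<bar>w (coeff f m)\<bar> + 1 \<le> w y"
        using tau_radius_ge[of "{n, m}" f w] n m(2) y(2) by auto
      ultimately have "w (T m) < w (T n)"
        unfolding Tm(2) using valuation_tau_term[OF False y(1)] by (simp add: T_def algebra_simps)
      thus ?thesis by (simp add: val_gt_def)
    qed (simp add: T_def)
  qed
  moreover have "tau_eval q f y = T m + (\<Sum>n\<in>{..degree f} - {m}. T n)"
    unfolding tau_eval_def T_def using m(2) by (simp add: sum.remove)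
  ultimately show ?thesis using valuation_add_dominant[OF w Tm(1)] Tm(2) by (simp add: m_def)
qed

lemma tau_eval_expands:
  assumes f: "coeff f 0 = 0 \<or> 0 < w (coeff f 0)" "f \<noteq> 0" and y: "y \<noteq> 0" "tau_radius w f \<le> w y"
  shows "tau_eval q f y \<noteq> 0 \<and> w y < w (tau_eval q f y)"
proof -
  define m where "m = low_degree f"
  have low: "tau_eval q f y \<noteq> 0" "w (tau_eval q f y) = w (coeff f m) + of_nat (q ^ m) * w y"
    using tau_eval_low_term_dominates[OF f(2) y] by (simp_all add: m_def)
  have wy: "1 \<le> w y" using tau_radius_ge_1[of w f] y(2) by simp
  show ?thesis
  proof (cases "coeff f 0 = 0")
    case False
    then show ?thesis using low f(1) low_degree_eq_0[OF False] by (simp add: m_def)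
  next
    case True
    hence "m \<noteq> 0" using low_degree(1)[OF f(2)] by (metis m_def)
    hence "q ^ 1 \<le> q ^ m" using q by (intro power_increasing) auto
    hence "(2 :: 'b) \<le> of_nat (q ^ m)" using q
      by (metis le_trans of_nat_numeral of_nat_le_iff power_one_right)
    hence "2 * w y \<le> of_nat (q ^ m) * w y" using wy by (intro mult_right_mono) auto
    moreover have "\<bar>w (coeff f m)\<bar> + 1 \<le> w y"
      using tau_radius_ge[of "{m}" f w] low_degree(2)[OF f(2)] y(2) by (simp add: m_def)
    ultimately show ?thesis using low by simp
  qed
qed

lemma tau_eval_isometric:
  assumes c: "coeff f 0 \<noteq> 0" "w (coeff f 0) = 0" and y: "y \<noteq> 0" "tau_radius w f \<le> w y"
  shows "tau_eval q f y \<noteq> 0 \<and> w (tau_eval q f y) = w y"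
proof -
  have "f \<noteq> 0" using c(1) by auto
  thus ?thesis using tau_eval_low_term_dominates[OF _ y] c low_degree_eq_0[OF c(1)] by simp
qed

lemma tau_eval_approx_linear:
  assumes y: "y \<noteq> 0" "tau_radius w f \<le> w y"
  shows "val_ge w (w y + 1) (tau_eval q f y - coeff f 0 * y)"
proof -
  define T where "T n = coeff f n * y ^ (q ^ n)" for n
  have wy: "1 \<le> w y" using tau_radius_ge_1[of w f] y(2) by simp
  have "tau_eval q f y = T 0 + (\<Sum>n\<in>{..degree f} - {0}. T n)"
    unfolding tau_eval_def T_def by (subst sum.remove[of _ 0]) auto
  hence eq: "tau_eval q f y - coeff f 0 * y = (\<Sum>n\<in>{..degree f} - {0}. T n)"
    by (simp add: T_def)
  have "val_ge w (w y + 1) (T n)" if n: "n \<in> {..degree f} - {0}" for n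
  proof (cases "coeff f n = 0")
    case False
    have "q ^ 1 \<le> q ^ n" using n q by (intro power_increasing) auto
    hence "(2 :: 'b) \<le> of_nat (q ^ n)" using q
      by (metis le_trans of_nat_numeral of_nat_le_iff power_one_right)
    hence "2 * w y \<le> of_nat (q ^ n) * w y" using wy by (intro mult_right_mono) auto
    moreover have "\<bar>w (coeff f n)\<bar> + 1 \<le> w y" using tau_radius_ge[of "{n}" f w] n y(2) by auto
    ultimately have "w y + 1 \<le> w (T n)"
      using valuation_tau_term[OF False y(1)] by (simp add: T_def)
    thus ?thesis by (simp add: val_ge_def)
  qed (simp add: T_def)
  thus ?thesis unfolding eq by (intro val_ge_sum[OF w])
qed

lemma tau_eval_iterate_approx:
  assumes c: "coeff f 0 \<noteq> 0" "w (coeff f 0) = 0" and y: "y \<noteq> 0" "tau_radius w f \<le> w y"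
  shows "val_ge w (w y + 1) ((tau_eval q f ^^ n) y - coeff f 0 ^ n * y)"
proof -
  have iter: "(tau_eval q f ^^ k) y \<noteq> 0 \<and> w ((tau_eval q f ^^ k) y) = w y" for k
    by (induction k) (use tau_eval_isometric[OF c] y in auto)
  show ?thesis
  proof (induction n)
    case (Suc n)
    define z where "z = (tau_eval q f ^^ n) y"
    have "(tau_eval q f ^^ Suc n) y - coeff f 0 ^ Suc n * y =
        (tau_eval q f z - coeff f 0 * z) + coeff f 0 * (z - coeff f 0 ^ n * y)"
      by (simp add: z_def algebra_simps)
    moreover have "val_ge w (w y + 1) (tau_eval q f z - coeff f 0 * z)"
      using tau_eval_approx_linear[of z f] iter[of n] y(2) by (simp add: z_def)
    moreover have "val_ge w (w y + 1) (coeff f 0 * (z - coeff f 0 ^ n * y))"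
      using val_ge_mult[OF w Suc.IH[folded z_def] c(1)] c(2) by simp
    ultimately show ?case by (simp add: val_ge_add[OF w])
  qed simp
qed

end

section \<open>Drinfeld modules over a valued field\<close>

lemma periodic_point_in_invariant_set:
  assumes S: "finite S" "x \<in> S" "\<And>y. y \<in> S \<Longrightarrow> g y \<in> S"
  obtains y N where "y \<in> S" "0 < N" "(g ^^ N) y = y"
proof -
  have orbit: "(g ^^ k) x \<in> S" for k by (induction k) (use S in auto)
  hence "\<not> inj (\<lambda>k. (g ^^ k) x)"
    using S(1) infinite_UNIV_nat finite_imageD finite_subset by (metis image_subsetI)
  then obtain k l where "k \<noteq> l" "(g ^^ k) x = (g ^^ l) x" unfolding inj_def by blast
  then obtain k l where kl: "k < l" "(g ^^ k) x = (g ^^ l) x" by (metis linorder_neqE_nat)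
  have "(g ^^ (l - k)) ((g ^^ k) x) = (g ^^ (l - k + k)) x" by (simp add: funpow_add)
  also have "l - k + k = l" using kl(1) by simp
  finally show thesis using that[of "(g ^^ k) x" "l - k"] orbit kl by simp
qed

locale valued_drinfeld_module =
  fixes Fq :: "'F::field set" and q :: nat and vinf :: "'F \<Rightarrow> int"
    and i :: "'F \<Rightarrow> 'K::field" and \<phi> :: "'F \<Rightarrow> 'K poly" and v :: "'K \<Rightarrow> int"
    and j :: "'K \<Rightarrow> 'L::field" and w :: "'L \<Rightarrow> rat"
  assumes Fq: "subfield Fq" "finite Fq" "card Fq = q"
    and curve: "function_field_over Fq"
    and i_hom: "ring_hom_on (ring_A Fq vinf) i"
    and drin: "drinfeld_module q (ring_A Fq vinf) i \<phi>"
    and v: "valuation v"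
    and j: "field_hom j" and w: "valuation w" and w_j: "\<And>x. x \<noteq> 0 \<Longrightarrow> w (j x) = of_int (v x)"
begin

abbreviation "A \<equiv> ring_A Fq vinf"

lemmas A_subring = ring_A_subring[of Fq vinf]
lemmas i_0 = ring_hom_on_0[OF A_subring i_hom]
lemmas i_1 = ring_hom_on_1[OF A_subring i_hom]
lemmas i_mult = ring_hom_on_mult[OF A_subring i_hom]
lemmas i_diff = ring_hom_on_diff[OF A_subring i_hom]
lemmas i_power = ring_hom_on_power[OF A_subring i_hom]

lemma q_ge_2: "2 \<le> q"
  by (rule finite_field_card_ge_2[OF Fq])

lemma frobenius_L: "(x + y) ^ q = x ^ q + (y :: 'L) ^ q"
proof (rule frobenius_add)
  show "0 < q" using q_ge_2 by simp
  fix k assume k: "0 < k" "k < q"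
  have "(of_nat (q choose k) :: 'L) = j (i (of_nat (q choose k)))"
    by (simp add: ring_hom_on_of_nat[OF A_subring i_hom] field_hom_of_nat[OF j])
  also have "\<dots> = 0"
    by (simp add: finite_field_binomial_eq_0[OF Fq k] i_0 field_hom_0[OF j])
  finally show "(of_nat (q choose k) :: 'L) = 0" .
qed

lemma phi_1: "\<phi> 1 = 1"
  using drin by (simp add: drinfeld_module_def)

lemma phi_add: "a \<in> A \<Longrightarrow> b \<in> A \<Longrightarrow> \<phi> (a + b) = \<phi> a + \<phi> b"
  using drin by (simp add: drinfeld_module_def)

lemma phi_mult: "a \<in> A \<Longrightarrow> b \<in> A \<Longrightarrow> \<phi> (a * b) = tmult q (\<phi> a) (\<phi> b)"
  using drin by (simp add: drinfeld_module_def)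

lemma phi_coeff_0: "a \<in> A \<Longrightarrow> coeff (\<phi> a) 0 = i a"
  using drin by (simp add: drinfeld_module_def)

lemma phi_0: "\<phi> 0 = 0"
  using phi_add[of 0 0] subring_0[OF A_subring] by (metis add_cancel_right_right add_0)

lemma exists_phi_nonconstant:
  obtains t where "t \<in> A" "1 \<le> degree (\<phi> t)"
proof -
  obtain t where t: "t \<in> A" "\<phi> t \<noteq> [:i t:]" using drin by (auto simp: drinfeld_module_def)
  have "degree (\<phi> t) \<noteq> 0"
    using t phi_coeff_0[OF t(1)] degree_0_id[of "\<phi> t"] by auto
  thus thesis using that t(1) by simp
qed

lemma i_Fq_nonzero:
  assumes c: "c \<in> Fq" "c \<noteq> 0"
  shows "i c \<noteq> 0"
proof
  assume "i c = 0"
  moreover have "i (c * inverse c) = i c * i (inverse c)"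
    using c subfield_inverse[OF Fq(1)] subset_ring_A by (intro i_mult) auto
  ultimately show False using c(2) i_1 by simp
qed

lemma phi_Fq:
  assumes c: "c \<in> Fq"
  shows "\<phi> c = [:i c:]"
proof (cases "c = 0")
  case True
  then show ?thesis by (simp add: phi_0 i_0)
next
  case False
  have cA: "c \<in> A" "inverse c \<in> A" using c subfield_inverse[OF Fq(1) c] subset_ring_A by auto
  have "tmult q (\<phi> c) (\<phi> (inverse c)) = 1"
    using phi_mult[OF cA] False phi_1 by simp
  hence "\<phi> c \<noteq> 0" "\<phi> (inverse c) \<noteq> 0" "degree (tmult q (\<phi> c) (\<phi> (inverse c))) = 0" by auto
  hence "degree (\<phi> c) = 0" using tmult_nonzero[of q "\<phi> c" "\<phi> (inverse c)"] q_ge_2 by simp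
  thus ?thesis using phi_coeff_0[OF cA(1)] degree_0_id[of "\<phi> c"] by simp
qed

lemma v_i_Fq:
  assumes c: "c \<in> Fq" "c \<noteq> 0"
  shows "v (i c) = 0"
proof -
  have "i c ^ (q - 1) = 1"
    using i_power[of c "q - 1"] c subset_ring_A finite_field_power_card_minus_1[OF Fq c] i_1 by auto
  hence "of_nat (q - 1) * v (i c) = 0"
    using valuation_power[OF v i_Fq_nonzero[OF c], of "q - 1"] valuation_one[OF v] by simp
  thus ?thesis using q_ge_2 by simp
qed

lemma degree_phi_poly:
  assumes a: "a \<in> A" "1 \<le> degree (\<phi> a)"
  shows "coeffs_in Fq g \<Longrightarrow> g \<noteq> 0 \<Longrightarrow>
    \<phi> (poly g a) \<noteq> 0 \<and> degree (\<phi> (poly g a)) = degree g * degree (\<phi> a)"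
proof (induction g)
  case (pCons c g)
  have c: "c \<in> Fq" and g: "coeffs_in Fq g" using pCons.prems(1) by (auto simp: coeffs_in_pCons)
  have gA: "poly g a \<in> A"
    using subring_poly[OF A_subring coeffs_in_mono[OF g subset_ring_A] a(1)] .
  have cA: "c \<in> A" using c subset_ring_A by blast
  have eq: "\<phi> (poly (pCons c g) a) = [:i c:] + tmult q (\<phi> a) (\<phi> (poly g a))"
    using cA a(1) gA subring_mult[OF A_subring a(1) gA] by (simp add: phi_add phi_mult phi_Fq[OF c])
  show ?case
  proof (cases "g = 0")
    case True
    then show ?thesis using eq pCons.hyps i_Fq_nonzero[OF c] by (simp add: phi_0)
  next
    case False
    have "\<phi> a \<noteq> 0" using a(2) by auto
    hence tm: "tmult q (\<phi> a) (\<phi> (poly g a)) \<noteq> 0"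
      "degree (tmult q (\<phi> a) (\<phi> (poly g a))) = degree (\<phi> a) + degree g * degree (\<phi> a)"
      using tmult_nonzero[of q "\<phi> a" "\<phi> (poly g a)"] pCons.IH[OF g False] q_ge_2 by auto
    hence "degree (\<phi> (poly (pCons c g) a)) = degree (tmult q (\<phi> a) (\<phi> (poly g a)))"
      unfolding eq using a(2) by (intro degree_add_eq_right) simp
    then show ?thesis using tm False a(2) by auto
  qed
qed simp

lemma transcendental_if_phi_nonconstant:
  assumes a: "a \<in> A" "1 \<le> degree (\<phi> a)"
  shows "transcendental_over Fq a"
  unfolding transcendental_over_def
proof (intro allI impI notI)
  fix P assume "coeffs_in Fq P" "P \<noteq> 0" "poly P a = 0"
  thus False using degree_phi_poly[OF a, of P] phi_0 by simp
qed

text \<open>A nonzero \<open>a\<close> divides, inside \<open>A\<close>, a nonzero polynomial \<open>g(t)\<close> in an element \<open>t\<close>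
  with \<open>\<phi> t\<close> nonconstant, and \<open>\<phi>\<close> does not vanish on such polynomials.\<close>

lemma phi_nonzero:
  assumes a: "a \<in> A" "a \<noteq> 0"
  shows "\<phi> a \<noteq> 0"
proof
  assume "\<phi> a = 0"
  obtain t where t: "t \<in> A" "1 \<le> degree (\<phi> t)" by (rule exists_phi_nonconstant)
  have "algebraic_over (ring_adjoin Fq t) a"
    using function_field_algebraic_over_ring_adjoin[OF Fq(1) curve
        transcendental_if_phi_nonconstant[OF t]] .
  then obtain c h where c: "c \<in> ring_adjoin Fq t" "c \<noteq> 0" and h: "h \<in> A" "c = a * h"
    using root_divides_nonzero_coeff[OF A_subring ring_adjoin_subset[OF A_subring subset_ring_A t(1)] a]
    unfolding algebraic_over_def by blast
  obtain g where g: "coeffs_in Fq g" "c = poly g t" using c(1) unfolding ring_adjoin_iff by blast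
  have "\<phi> c = 0" using h phi_mult[OF a(1) h(1)] \<open>\<phi> a = 0\<close> by simp
  moreover have "g \<noteq> 0" using c(2) g(2) by auto
  ultimately show False using degree_phi_poly[OF t g(1)] g(2) by simp
qed

lemma power_ne_1_if_phi_nonconstant:
  assumes t: "t \<in> A" "1 \<le> degree (\<phi> t)" and N: "0 < N"
  shows "t ^ N \<noteq> 1"
proof
  assume "t ^ N = 1"
  moreover have "coeffs_in Fq (monom 1 N)"
    using coeffs_in_monom[OF subfield_subring[OF Fq(1)] subring_1[OF subfield_subring[OF Fq(1)]]] .
  ultimately have "degree (\<phi> 1) = N * degree (\<phi> t)"
    using degree_phi_poly[OF t, of "monom 1 N"] by (simp add: poly_monom degree_monom_eq)
  thus False using phi_1 N t(2) by simp
qed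

lemma tau_eval_phi_mult:
  assumes "a \<in> A" "b \<in> A"
  shows "tau_eval q (map_poly j (\<phi> (a * b))) x =
    tau_eval q (map_poly j (\<phi> a)) (tau_eval q (map_poly j (\<phi> b)) x)"
  using assms q_ge_2
  by (simp add: phi_mult map_poly_tmult[OF j] tau_eval_tmult[OF q_ge_2 frobenius_L])

lemma torsion_invariant:
  assumes "a \<in> A" "s \<in> A" "tau_eval q (map_poly j (\<phi> a)) y = 0"
  shows "tau_eval q (map_poly j (\<phi> a)) (tau_eval q (map_poly j (\<phi> s)) y) = 0"
  using assms tau_eval_phi_mult[of a s y] tau_eval_phi_mult[of s a y]
  by (simp add: mult.commute tau_eval_at_0[OF q_ge_2 frobenius_L])

lemma torsion_finite:
  assumes "a \<in> A" "a \<noteq> 0"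
  shows "finite {y. tau_eval q (map_poly j (\<phi> a)) y = 0}"
proof (rule tau_eval_roots_finite[OF q_ge_2 frobenius_L])
  show "map_poly j (\<phi> a) \<noteq> 0"
    using phi_nonzero[OF assms]
    by (simp add: map_poly_eq_0_iff field_hom_0[OF j] field_hom_eq_0_iff[OF j])
qed

end

context valued_drinfeld_module
begin

lemma transcendental_if_negative_valuation:
  assumes t: "t \<in> A" "i t \<noteq> 0" "v (i t) < 0"
  shows "transcendental_over Fq t"
  unfolding transcendental_over_def
proof (intro allI impI)
  fix P assume P: "coeffs_in Fq P" "P \<noteq> 0"
  define Q where "Q = map_poly i P"
  have cP: "coeff P k \<in> Fq" for k using P(1) by (simp add: coeffs_in_def)
  have cQ: "coeff Q k = i (coeff P k)" for k by (simp add: Q_def coeff_map_poly i_0)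
  have "degree Q = degree P"
    using i_Fq_nonzero[OF cP] P(2) by (simp add: Q_def map_poly_degree_eq)
  hence lc: "lead_coeff Q = i (lead_coeff P)" by (simp add: cQ)
  have "poly Q (i t) \<noteq> 0"
  proof (rule poly_nonzero_at_negative_valuation[OF v])
    show "Q \<noteq> 0" using lc(1) i_Fq_nonzero[OF cP] P(2) by auto
    show "coeff Q k = 0 \<or> v (lead_coeff Q) \<le> v (coeff Q k)" for k
      using lc(1) cQ v_i_Fq[OF cP] P(2) i_0 by (cases "coeff P k = 0") auto
  qed (use t in auto)
  moreover have "i (poly P t) = poly Q (i t)"
    unfolding Q_def
    by (rule ring_hom_on_poly[OF A_subring i_hom coeffs_in_mono[OF P(1) subset_ring_A] t(1)])
  ultimately show "poly P t \<noteq> 0" using i_0 by auto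
qed

lemma nonneg_valuation_if_not_over:
  assumes gen: "generic_char A i" and not_over: "\<not> lies_over A i v vinf"
    and a: "a \<in> A" "a \<noteq> 0"
  shows "0 \<le> v (i a)"
proof (rule ccontr)
  assume neg: "\<not> 0 \<le> v (i a)"
  have inj: "\<And>b. b \<in> A \<Longrightarrow> b \<noteq> 0 \<Longrightarrow> i b \<noteq> 0" using gen by (auto simp: generic_char_def)
  have "transcendental_over Fq a"
    using transcendental_if_negative_valuation[OF a(1) inj[OF a]] neg by simp
  hence frac: "\<exists>b\<in>A. b \<noteq> 0 \<and> b * f \<in> A" for f
    using ring_A_fraction[OF Fq(1) curve a(1)] by metis
  let ?u = "fraction_valuation A i v"
  have u: "valuation ?u" "\<And>b. b \<in> A \<Longrightarrow> b \<noteq> 0 \<Longrightarrow> ?u b = v (i b)"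
    using valuation_fraction_valuation[OF A_subring i_hom inj v frac]
      fraction_valuation_on_A[OF A_subring i_hom inj v frac] by auto
  obtain e w' where e: "e > 0" "discrete_valuation w'" "\<And>x. x \<noteq> 0 \<Longrightarrow> ?u x = e * w' x"
    using valuation_normalize[OF u(1) a(2)] u(2)[OF a] neg by auto
  have "w' c = 0" if "c \<in> Fq" "c \<noteq> 0" for c
    using e(1) e(3)[OF that(2)] u(2)[OF _ that(2)] v_i_Fq[OF that] that(1) subset_ring_A by auto
  hence "place Fq w'" using e(2) by (simp add: place_def)
  moreover have "w' a < 0"
    using e(1) e(3)[OF a(2)] u(2)[OF a] neg by (smt (verit) mult_nonneg_nonneg)
  ultimately have "same_val w' vinf" using a unfolding ring_A_iff by force
  have "lies_over A i v vinf"
    unfolding lies_over_def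
  proof (intro exI[of _ "real_of_int e"] conjI ballI impI)
    show "0 < real_of_int e" using e(1) by simp
    fix b assume b: "b \<in> A" "b \<noteq> 0"
    have "v (i b) = e * w' b" using e(3)[OF b(2)] u(2)[OF b] by simp
    thus "real_of_int (v (i b)) = real_of_int e * real_of_int (vinf b)"
      using \<open>same_val w' vinf\<close> b(2) by (simp add: same_val_def)
  qed
  thus False using not_over by contradiction
qed

lemma no_small_torsion_expanding:
  assumes s: "s \<in> A" "s \<noteq> 0" "i s = 0 \<or> 0 < v (i s)"
    and x: "x \<noteq> 0" "tau_radius w (map_poly j (\<phi> s)) \<le> w x"
  shows "\<not> torsion_point q A \<phi> j x"
proof
  assume "torsion_point q A \<phi> j x"
  then obtain a where a: "a \<in> A" "a \<noteq> 0" "tau_eval q (map_poly j (\<phi> a)) x = 0"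
    unfolding torsion_point_def by blast
  define f where "f = map_poly j (\<phi> s)"
  define g where "g = tau_eval q f"
  define S where "S = {y. y \<noteq> 0 \<and> tau_radius w f \<le> w y \<and> tau_eval q (map_poly j (\<phi> a)) y = 0}"
  have c0: "coeff f 0 = j (i s)"
    by (simp add: f_def coeff_map_poly field_hom_0[OF j] phi_coeff_0[OF s(1)])
  have f: "coeff f 0 = 0 \<or> 0 < w (coeff f 0)" "f \<noteq> 0"
  proof -
    show "coeff f 0 = 0 \<or> 0 < w (coeff f 0)"
      using c0 s(3) w_j[of "i s"] field_hom_0[OF j] by (cases "i s = 0") simp_all
    show "f \<noteq> 0"
      using phi_nonzero[OF s(1,2)]
      by (simp add: f_def map_poly_eq_0_iff field_hom_0[OF j] field_hom_eq_0_iff[OF j])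
  qed
  have expands: "g y \<noteq> 0 \<and> w y < w (g y)" if "y \<in> S" for y
    using tau_eval_expands[OF w q_ge_2 f] that by (simp add: S_def g_def)
  have "g y \<in> S" if y: "y \<in> S" for y
  proof -
    have "tau_radius w f \<le> w (g y)" using expands[OF y] y by (auto simp: S_def)
    thus ?thesis using expands[OF y] y torsion_invariant[OF a(1) s(1)] by (simp add: S_def g_def f_def)
  qed
  hence S: "finite S" "x \<in> S" "\<And>y. y \<in> S \<Longrightarrow> g y \<in> S"
    using torsion_finite[OF a(1,2)] x a(3) by (auto simp: S_def f_def intro: finite_subset)
  obtain y N where y: "y \<in> S" "0 < N" "(g ^^ N) y = y"
    by (rule periodic_point_in_invariant_set[OF S])
  have "(g ^^ n) y \<in> S" for n by (induction n) (use S y in auto)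
  hence "strict_mono (\<lambda>n. w ((g ^^ n) y))" unfolding strict_mono_Suc_iff using expands by simp
  hence "w ((g ^^ 0) y) < w ((g ^^ N) y)" using y(2) by (rule strict_monoD)
  thus False using y(3) by simp
qed

lemma one_minus_power_unit:
  assumes gen: "generic_char A i" and unit: "\<And>a. a \<in> A \<Longrightarrow> a \<noteq> 0 \<Longrightarrow> v (i a) = 0"
    and t: "t \<in> A" "1 \<le> degree (\<phi> t)" and N: "0 < N"
  shows "1 - j (i t) ^ N \<noteq> 0" "w (1 - j (i t) ^ N) = 0"
proof -
  have tN: "t ^ N \<in> A" "1 - t ^ N \<in> A" "1 - t ^ N \<noteq> 0"
    using power_ne_1_if_phi_nonconstant[OF t N] subring_power[OF A_subring t(1)]
      subring_diff[OF A_subring subring_1[OF A_subring]] by auto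
  have "i (1 - t ^ N) \<noteq> 0" using gen tN(2,3) by (auto simp: generic_char_def)
  moreover have "1 - j (i t) ^ N = j (i (1 - t ^ N))"
    using i_diff[OF subring_1[OF A_subring] tN(1)] i_1 i_power[OF t(1)]
    by (simp add: field_hom_diff[OF j] field_hom_1[OF j] field_hom_power[OF j])
  ultimately show "1 - j (i t) ^ N \<noteq> 0" "w (1 - j (i t) ^ N) = 0"
    using unit[OF tN(2,3)] w_j by (simp_all add: field_hom_eq_0_iff[OF j])
qed

lemma no_small_torsion_isometric:
  assumes gen: "generic_char A i" and unit: "\<And>a. a \<in> A \<Longrightarrow> a \<noteq> 0 \<Longrightarrow> v (i a) = 0"
    and t: "t \<in> A" "1 \<le> degree (\<phi> t)"
    and x: "x \<noteq> 0" "tau_radius w (map_poly j (\<phi> t)) \<le> w x"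
  shows "\<not> torsion_point q A \<phi> j x"
proof
  assume "torsion_point q A \<phi> j x"
  then obtain a where a: "a \<in> A" "a \<noteq> 0" "tau_eval q (map_poly j (\<phi> a)) x = 0"
    unfolding torsion_point_def by blast
  have inj: "\<And>b. b \<in> A \<Longrightarrow> b \<noteq> 0 \<Longrightarrow> i b \<noteq> 0" using gen by (auto simp: generic_char_def)
  define f where "f = map_poly j (\<phi> t)"
  define g where "g = tau_eval q f"
  define c where "c = j (i t)"
  have "t \<noteq> 0" using t(2) phi_0 by auto
  hence c: "coeff f 0 \<noteq> 0" "w (coeff f 0) = 0" "coeff f 0 = c"
    using inj[OF t(1)] unit[OF t(1)] w_j
    by (auto simp: f_def c_def coeff_map_poly field_hom_0[OF j] phi_coeff_0[OF t(1)]
        field_hom_eq_0_iff[OF j])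
  define S where "S = {y. y \<noteq> 0 \<and> w y = w x \<and> tau_eval q (map_poly j (\<phi> a)) y = 0}"
  have S: "finite S" "x \<in> S" "\<And>y. y \<in> S \<Longrightarrow> g y \<in> S"
    using torsion_finite[OF a(1,2)] x a(3) tau_eval_isometric[OF w q_ge_2, of f] c
      torsion_invariant[OF a(1) t(1)]
    by (auto simp: S_def g_def f_def intro: finite_subset)
  obtain y N where y: "y \<in> S" "0 < N" "(g ^^ N) y = y"
    by (rule periodic_point_in_invariant_set[OF S])
  have y': "y \<noteq> 0" "tau_radius w f \<le> w y" using y(1) x(2) by (simp_all add: S_def f_def)
  have "val_ge w (w y + 1) ((1 - c ^ N) * y)"
    using tau_eval_iterate_approx[OF w q_ge_2 c(1,2) y', of N] y(3) c(3)
    by (simp add: g_def algebra_simps)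
  moreover have "1 - c ^ N \<noteq> 0" "w (1 - c ^ N) = 0"
    using one_minus_power_unit[OF gen unit t y(2)] by (simp_all add: c_def)
  ultimately show False
    using y'(1) by (simp add: val_ge_def valuation_mult[OF w])
qed

theorem no_small_torsion:
  assumes not_over: "generic_char A i \<longrightarrow> \<not> lies_over A i v vinf"
  shows "\<exists>C::real. C > 0 \<and> (\<forall>x. x \<noteq> 0 \<longrightarrow> C \<le> real_of_rat (w x) \<longrightarrow> \<not> torsion_point q A \<phi> j x)"
proof -
  obtain s where s: "\<And>x. x \<noteq> 0 \<Longrightarrow> tau_radius w (map_poly j (\<phi> s)) \<le> w x \<Longrightarrow>
      \<not> torsion_point q A \<phi> j x"
  proof (cases "\<exists>s\<in>A. s \<noteq> 0 \<and> (i s = 0 \<or> 0 < v (i s))")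
    case True
    then show ?thesis using no_small_torsion_expanding that by blast
  next
    case False
    hence gen: "generic_char A i" by (auto simp: generic_char_def)
    have "v (i a) = 0" if "a \<in> A" "a \<noteq> 0" for a
      using False nonneg_valuation_if_not_over[OF gen _ that] not_over gen that by force
    moreover obtain t where "t \<in> A" "1 \<le> degree (\<phi> t)" by (rule exists_phi_nonconstant)
    ultimately show ?thesis using no_small_torsion_isometric[OF gen] that by blast
  qed
  define C where "C = tau_radius w (map_poly j (\<phi> s))"
  have "0 < real_of_rat C" using tau_radius_ge_1[of w "map_poly j (\<phi> s)"] by (simp add: C_def)
  moreover have "\<not> torsion_point q A \<phi> j x" if "x \<noteq> 0" "real_of_rat C \<le> real_of_rat (w x)" for x
    using s that by (simp add: C_def of_rat_less_eq)
  ultimately show ?thesis by blast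
qed

end

theorem lemma4p1:
  fixes Fq :: "'F::field set" and q :: nat
    and vinf :: "'F \<Rightarrow> int"
    and i :: "'F \<Rightarrow> 'K::field" and \<phi> :: "'F \<Rightarrow> 'K poly"
    and v :: "'K \<Rightarrow> int"
    and j :: "'K \<Rightarrow> 'L::field" and w :: "'L \<Rightarrow> rat"
  assumes Fq: "subfield Fq" "finite Fq" "card Fq = q"
    and curve: "function_field_over Fq"
    and inf: "place Fq vinf"
    and i_hom: "ring_hom_on (ring_A Fq vinf) i"
    and drin: "drinfeld_module q (ring_A Fq vinf) i \<phi>"
    and v: "discrete_valuation v"
    and not_over: "generic_char (ring_A Fq vinf) i \<longrightarrow> \<not> lies_over (ring_A Fq vinf) i v vinf"
    and L: "is_alg_closure_of_completion v j w"
  shows "\<exists>C::real. C > 0 \<and>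
           (\<forall>x. x \<noteq> 0 \<longrightarrow> C \<le> real_of_rat (w x) \<longrightarrow> \<not> torsion_point q (ring_A Fq vinf) \<phi> j x)"
proof -
  interpret valued_drinfeld_module Fq q vinf i \<phi> v j w
    using Fq curve i_hom drin v L
    by unfold_locales (auto simp: discrete_valuation_def is_alg_closure_of_completion_def)
  show ?thesis using no_small_torsion not_over by blast
qed

end
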